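(* Let $H\in(1/2,1)$, $T>0$, and let $\Gamma^H_T:L_2[0,T]\to L_2[0,T]$ be $\Gamma^H_Tf(t)=\int_0^T\frac{H(2H-1)}{|t-s|^{2-2H}}f(s)\,ds$. Then $\Gamma^H_T$ is bounded, self-adjoint and positive semidefinite, the operator $\Gamma_T=I+\Gamma^H_T$ is invertible on $L_2[0,T]$, and the function $h_T=\Gamma_T^{-1}\mathbf 1$ is given by the $L_2$-convergent series $$h_T=\sum_{k=0}^\infty\frac{\big(\tfrac12\|\Gamma^H_T\|\,I-\Gamma^H_T\big)^k\mathbf 1}{\big(1+\tfrac12\|\Gamma^H_T\|\big)^{k+1}}.$$ Consequently, for the model $X_t=\theta t+W_t+B^H_t$ with $W$ a standard Wiener process and $B^H$ an independent fractional Brownian motion with Hurst index $H$, there is $h_T\in L_2[0,T]$ with $\Gamma_Th_T=\mathbf 1$.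
   Context: $\mathbf 1$ denotes the constant function $1$ on $[0,T]$, $I$ the identity operator, and $\|\cdot\|$ the operator norm on $L_2[0,T]$. A fractional Brownian motion with Hurst index $H$ is a centered Gaussian process with covariance $\frac12(t^{2H}+s^{2H}-|t-s|^{2H})$; for $W+B^H$ the operator $\Gamma_T=I+\Gamma^H_T$ is the one satisfying $\mathbb{E}[\int_0^Tf\,d(W+B^H)\int_0^Tg\,d(W+B^H)]=\int_0^T(\Gamma_Tf)(t)g(t)\,dt$. *)

theory Defs
  imports "HOL-Analysis.Analysis"
begin

text \<open>Elements of L_2[0,T] are represented by real functions on the real line that are
Borel measurable and square integrable on [0,T]; equalities in L_2 are a.e. on [0,T].\<close>

definition L2space :: "real \<Rightarrow> (real \<Rightarrow> real) set" where
  "L2space T = {f. set_borel_measurable lborel {0..T} f \<and>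
                   set_integrable lborel {0..T} (\<lambda>t. (f t)\<^sup>2)}"

definition L2inner :: "real \<Rightarrow> (real \<Rightarrow> real) \<Rightarrow> (real \<Rightarrow> real) \<Rightarrow> real" where
  "L2inner T f g = (LINT t:{0..T}|lborel. f t * g t)"

definition L2norm :: "real \<Rightarrow> (real \<Rightarrow> real) \<Rightarrow> real" where
  "L2norm T f = sqrt (LINT t:{0..T}|lborel. (f t)\<^sup>2)"

definition L2eq :: "real \<Rightarrow> (real \<Rightarrow> real) \<Rightarrow> (real \<Rightarrow> real) \<Rightarrow> bool" where
  "L2eq T f g \<longleftrightarrow> (AE t in lborel. t \<in> {0..T} \<longrightarrow> f t = g t)"

definition GammaH :: "real \<Rightarrow> real \<Rightarrow> (real \<Rightarrow> real) \<Rightarrow> (real \<Rightarrow> real)" where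
  "GammaH H T f = (\<lambda>t. LINT s:{0..T}|lborel. H * (2 * H - 1) / \<bar>t - s\<bar> powr (2 - 2 * H) * f s)"

definition GammaT :: "real \<Rightarrow> real \<Rightarrow> (real \<Rightarrow> real) \<Rightarrow> (real \<Rightarrow> real)" where
  "GammaT H T f = (\<lambda>t. f t + GammaH H T f t)"

definition L2opnorm :: "real \<Rightarrow> ((real \<Rightarrow> real) \<Rightarrow> (real \<Rightarrow> real)) \<Rightarrow> real" where
  "L2opnorm T A = Sup {L2norm T (A f) | f. f \<in> L2space T \<and> L2norm T f \<le> 1}"

definition hpartial :: "real \<Rightarrow> real \<Rightarrow> nat \<Rightarrow> (real \<Rightarrow> real)" where
  "hpartial H T n = (let c = L2opnorm T (GammaH H T) / 2;
                         A = (\<lambda>f t. c * f t - GammaH H T f t)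
                     in (\<lambda>t. \<Sum>k<n. (A ^^ k) (\<lambda>_. 1) t / (1 + c) ^ (k + 1)))"

end

theory Submission
  imports Defs
begin

text \<open>\<open>\<Gamma>\<^sup>H\<^sub>T\<close> is the integral operator with the Riesz kernel \<open>c \<bar>t - s\<bar>\<^sup>-\<^sup>a\<close>, where
  \<open>c = H(2H - 1) > 0\<close> and \<open>a = 2 - 2H \<in> (0, 1)\<close>. Its row integrals are bounded by
  \<open>2c T\<^sup>1\<^sup>-\<^sup>a / (1 - a)\<close>, so by the Schur test it is a bounded self-adjoint operator on
  \<open>L\<^sup>2[0, T]\<close>. It is positive because \<open>\<bar>x\<bar>\<^sup>-\<^sup>a = \<Gamma>(a)\<^sup>-\<^sup>1 \<integral>\<^sub>0\<^sup>\<infinity> \<lambda>\<^sup>a\<^sup>-\<^sup>1 e\<^sup>-\<^sup>\<lambda>\<^sup>\<bar>\<^sup>x\<^sup>\<bar> d\<lambda>\<close> is a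
  mixture of the kernels \<open>e\<^sup>-\<^sup>\<lambda>\<^sup>|\<^sup>t\<^sup>-\<^sup>s\<^sup>|\<close>, which are covariances (of stationary
  Ornstein--Uhlenbeck processes).

  For a positive operator \<open>K\<close> and \<open>c = \<parallel>K\<parallel>/2\<close> one has \<open>\<parallel>cI - K\<parallel> \<le> c\<close>. Writing
  \<open>I + K = (1 + c) I - (cI - K)\<close> then yields the Neumann series
  \<open>(I + K)\<^sup>-\<^sup>1 = \<Sum>\<^sub>k (cI - K)\<^sup>k / (1 + c)\<^sup>k\<^sup>+\<^sup>1\<close>, which converges geometrically with ratio
  \<open>c / (1 + c)\<close>, while \<open>\<parallel>(I + K) f\<parallel>\<^sup>2 \<ge> \<langle>(I + K) f, f\<rangle> \<ge> \<parallel>f\<parallel>\<^sup>2\<close> gives injectivity.\<close>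

section \<open>Square-integrable functions\<close>

definition square_integrable :: "'a measure \<Rightarrow> ('a \<Rightarrow> real) \<Rightarrow> bool" where
  "square_integrable M f \<longleftrightarrow> f \<in> borel_measurable M \<and> integrable M (\<lambda>x. (f x)\<^sup>2)"

definition L2_norm :: "'a measure \<Rightarrow> ('a \<Rightarrow> real) \<Rightarrow> real" where
  "L2_norm M f = sqrt (\<integral>x. (f x)\<^sup>2 \<partial>M)"

definition L2_inner :: "'a measure \<Rightarrow> ('a \<Rightarrow> real) \<Rightarrow> ('a \<Rightarrow> real) \<Rightarrow> real" where
  "L2_inner M f g = (\<integral>x. f x * g x \<partial>M)"

lemma square_integrable_measurable:
  "square_integrable M f \<Longrightarrow> f \<in> borel_measurable M"
  by (simp add: square_integrable_def)

lemma square_integrable_mult_integrable: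
  assumes "square_integrable M f" "square_integrable M g"
  shows "integrable M (\<lambda>x. f x * g x)"
proof (rule Bochner_Integration.integrable_bound)
  show "integrable M (\<lambda>x. (f x)\<^sup>2 + (g x)\<^sup>2)" "(\<lambda>x. f x * g x) \<in> borel_measurable M"
    using assms by (auto simp: square_integrable_def)
  have "\<bar>f x * g x\<bar> \<le> (f x)\<^sup>2 + (g x)\<^sup>2" for x
  proof -
    have "2 * (\<bar>f x\<bar> * \<bar>g x\<bar>) \<le> (f x)\<^sup>2 + (g x)\<^sup>2"
      using sum_squares_bound[of "\<bar>f x\<bar>" "\<bar>g x\<bar>"] by simp
    moreover have "0 \<le> \<bar>f x\<bar> * \<bar>g x\<bar>" by simp
    ultimately show ?thesis unfolding abs_mult by linarith
  qed
  then show "AE x in M. norm (f x * g x) \<le> norm ((f x)\<^sup>2 + (g x)\<^sup>2)"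
    by simp
qed

lemma square_integrable_add:
  assumes "square_integrable M f" "square_integrable M g"
  shows "square_integrable M (\<lambda>x. f x + g x)"
proof -
  have "integrable M (\<lambda>x. (f x)\<^sup>2 + 2 * (f x * g x) + (g x)\<^sup>2)"
    using assms square_integrable_mult_integrable[OF assms] by (auto simp: square_integrable_def)
  then show ?thesis
    using assms by (simp add: square_integrable_def power2_sum algebra_simps borel_measurable_add)
qed

lemma square_integrable_cmult: "square_integrable M f \<Longrightarrow> square_integrable M (\<lambda>x. c * f x)"
  by (simp add: square_integrable_def power_mult_distrib borel_measurable_times)

lemma square_integrable_divide: "square_integrable M f \<Longrightarrow> square_integrable M (\<lambda>x. f x / c)"
  using square_integrable_cmult[of M f "1 / c"] by simp

lemma square_integrable_diff:
  assumes "square_integrable M f" "square_integrable M g"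
  shows "square_integrable M (\<lambda>x. f x - g x)"
  using square_integrable_add[OF assms(1) square_integrable_cmult[OF assms(2), of "-1"]] by simp

lemma square_integrable_abs: "square_integrable M f \<Longrightarrow> square_integrable M (\<lambda>x. \<bar>f x\<bar>)"
  by (simp add: square_integrable_def borel_measurable_abs)

lemma square_integrable_sum:
  "(\<And>i. i \<in> I \<Longrightarrow> square_integrable M (f i)) \<Longrightarrow> square_integrable M (\<lambda>x. \<Sum>i\<in>I. f i x)"
proof (induction I rule: infinite_finite_induct)
  case (insert i I)
  then show ?case
    using square_integrable_add[of M "f i" "\<lambda>x. \<Sum>i\<in>I. f i x"] by auto
qed (auto simp: square_integrable_def)

lemma (in finite_measure) square_integrable_const: "square_integrable M (\<lambda>x. c)"
  by (simp add: square_integrable_def)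

lemma (in finite_measure) square_integrable_integrable:
  "square_integrable M f \<Longrightarrow> integrable M f"
  unfolding square_integrable_def by (blast intro: square_integrable_imp_integrable)

lemma L2_norm_nonneg: "0 \<le> L2_norm M f"
  by (simp add: L2_norm_def)

lemma L2_norm_power2: "(L2_norm M f)\<^sup>2 = (\<integral>x. (f x)\<^sup>2 \<partial>M)"
  by (simp add: L2_norm_def)

lemma L2_norm_abs: "L2_norm M (\<lambda>x. \<bar>f x\<bar>) = L2_norm M f"
  by (simp add: L2_norm_def)

lemma L2_norm_cmult: "L2_norm M (\<lambda>x. c * f x) = \<bar>c\<bar> * L2_norm M f"
  by (simp add: L2_norm_def power_mult_distrib real_sqrt_mult)

lemma L2_norm_divide: "L2_norm M (\<lambda>x. f x / c) = L2_norm M f / \<bar>c\<bar>"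
  using L2_norm_cmult[of M "1 / c" f] by simp

lemma L2_norm_minus_commute: "L2_norm M (\<lambda>x. f x - g x) = L2_norm M (\<lambda>x. g x - f x)"
  using L2_norm_cmult[of M "-1" "\<lambda>x. g x - f x"] by simp

lemma L2_norm_cong_AE:
  "f \<in> borel_measurable M \<Longrightarrow> g \<in> borel_measurable M \<Longrightarrow> AE x in M. f x = g x \<Longrightarrow>
    L2_norm M f = L2_norm M g"
  unfolding L2_norm_def by (subst integral_cong_AE[of "\<lambda>x. (f x)\<^sup>2" M "\<lambda>x. (g x)\<^sup>2"]) auto

lemma L2_norm_eq_0_iff:
  assumes "square_integrable M f"
  shows "L2_norm M f = 0 \<longleftrightarrow> (AE x in M. f x = 0)"
proof -
  have "L2_norm M f = 0 \<longleftrightarrow> (AE x in M. (f x)\<^sup>2 = 0)"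
    unfolding L2_norm_def using assms
    by (subst integral_nonneg_eq_0_iff_AE[symmetric]) (auto simp: square_integrable_def)
  then show ?thesis by simp
qed

lemma nn_integral_square_eq_L2_norm:
  "square_integrable M f \<Longrightarrow> (\<integral>\<^sup>+x. ennreal ((f x)\<^sup>2) \<partial>M) = ennreal ((L2_norm M f)\<^sup>2)"
  unfolding L2_norm_power2
  by (rule nn_integral_eq_integral) (auto simp: square_integrable_def)

lemma square_integrable_nn_integral_bound:
  assumes "f \<in> borel_measurable M" "0 \<le> B"
    and "(\<integral>\<^sup>+x. ennreal ((f x)\<^sup>2) \<partial>M) \<le> ennreal (B\<^sup>2)"
  shows "square_integrable M f" "L2_norm M f \<le> B"
proof -
  have "integrable M (\<lambda>x. (f x)\<^sup>2)"
    using assms(1) order.strict_trans1[OF assms(3) ennreal_less_top]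
    by (simp add: integrable_iff_bounded)
  then show sq: "square_integrable M f"
    using assms(1) by (simp add: square_integrable_def)
  have "ennreal ((L2_norm M f)\<^sup>2) \<le> ennreal (B\<^sup>2)"
    using assms(3) by (simp add: nn_integral_square_eq_L2_norm[OF sq])
  then have "(L2_norm M f)\<^sup>2 \<le> B\<^sup>2"
    by (simp add: ennreal_le_iff)
  then show "L2_norm M f \<le> B"
    using assms(2) by (simp add: power2_le_iff_abs_le)
qed

lemma L2_inner_self: "L2_inner M f f = (L2_norm M f)\<^sup>2"
  unfolding L2_norm_power2 L2_inner_def by (simp add: power2_eq_square)

lemma L2_inner_commute: "L2_inner M f g = L2_inner M g f"
  by (simp add: L2_inner_def mult.commute)

lemma L2_inner_add_left:
  "square_integrable M f \<Longrightarrow> square_integrable M g \<Longrightarrow> square_integrable M h \<Longrightarrow>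
    L2_inner M (\<lambda>x. f x + g x) h = L2_inner M f h + L2_inner M g h"
  by (simp add: L2_inner_def distrib_right square_integrable_mult_integrable)

lemma L2_inner_cmult_left: "L2_inner M (\<lambda>x. c * f x) h = c * L2_inner M f h"
  by (simp add: L2_inner_def mult.assoc)

lemma L2_inner_cong_AE:
  "f \<in> borel_measurable M \<Longrightarrow> f' \<in> borel_measurable M \<Longrightarrow> g \<in> borel_measurable M \<Longrightarrow>
    AE x in M. f x = f' x \<Longrightarrow> L2_inner M f g = L2_inner M f' g"
  unfolding L2_inner_def by (rule integral_cong_AE) auto

lemma L2_norm_add_power2:
  assumes "square_integrable M f" "square_integrable M g"
  shows "(L2_norm M (\<lambda>x. f x + a * g x))\<^sup>2
    = (L2_norm M f)\<^sup>2 + 2 * a * L2_inner M f g + a\<^sup>2 * (L2_norm M g)\<^sup>2"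
proof -
  have "(\<integral>x. (f x + a * g x)\<^sup>2 \<partial>M) = (\<integral>x. (f x)\<^sup>2 + (2 * a * (f x * g x) + a\<^sup>2 * (g x)\<^sup>2) \<partial>M)"
    by (simp add: power2_sum power_mult_distrib algebra_simps)
  also have "\<dots> = (\<integral>x. (f x)\<^sup>2 \<partial>M) + (2 * a * (\<integral>x. f x * g x \<partial>M) + a\<^sup>2 * (\<integral>x. (g x)\<^sup>2 \<partial>M))"
    using assms square_integrable_mult_integrable[OF assms] by (simp add: square_integrable_def)
  finally show ?thesis
    by (simp add: L2_norm_power2 L2_inner_def)
qed

text \<open>Both Cauchy--Schwarz inequalities below, for \<open>L\<^sup>2\<close> and for the quadratic form of a
  positive operator, come from this discriminant argument.\<close>
lemma quadratic_nonneg_imp_discriminant_le: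
  fixes a b c :: real
  assumes nonneg: "\<And>t. 0 \<le> a + 2 * t * b + t\<^sup>2 * c"
  shows "b\<^sup>2 \<le> a * c"
proof (cases "c = 0")
  case True
  have "b = 0"
  proof (rule ccontr)
    assume "b \<noteq> 0"
    with nonneg[of "- (a + 1) / (2 * b)"] True show False
      by (simp add: field_simps)
  qed
  with True show ?thesis by simp
next
  case False
  have "0 < c"
  proof (rule ccontr)
    assume "\<not> 0 < c"
    with False have "c < 0" by simp
    define t where "t = sqrt ((\<bar>a\<bar> + 1) / - c)"
    have "t\<^sup>2 * c = - (\<bar>a\<bar> + 1)"
      using \<open>c < 0\<close> by (simp add: t_def divide_nonneg_neg)
    moreover have "0 \<le> 2 * a + 2 * (t\<^sup>2 * c)"
      using nonneg[of t] nonneg[of "- t"] by simp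
    ultimately show False by simp
  qed
  with nonneg[of "- b / c"] show ?thesis
    by (simp add: field_simps power2_eq_square)
qed

lemma L2_cauchy_schwarz:
  assumes "square_integrable M f" "square_integrable M g"
  shows "\<bar>L2_inner M f g\<bar> \<le> L2_norm M f * L2_norm M g"
proof -
  have "(L2_inner M f g)\<^sup>2 \<le> (L2_norm M f)\<^sup>2 * (L2_norm M g)\<^sup>2"
    by (rule quadratic_nonneg_imp_discriminant_le) (metis L2_norm_add_power2[OF assms] zero_le_power2)
  then show ?thesis
    by (simp add: power_mult_distrib[symmetric] L2_norm_nonneg power2_le_iff_abs_le)
qed

lemma L2_norm_triangle:
  assumes "square_integrable M f" "square_integrable M g"
  shows "L2_norm M (\<lambda>x. f x + g x) \<le> L2_norm M f + L2_norm M g"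
proof -
  have "(L2_norm M (\<lambda>x. f x + g x))\<^sup>2 = (L2_norm M f)\<^sup>2 + 2 * L2_inner M f g + (L2_norm M g)\<^sup>2"
    using L2_norm_add_power2[OF assms, of 1] by simp
  also have "\<dots> \<le> (L2_norm M f + L2_norm M g)\<^sup>2"
    using L2_cauchy_schwarz[OF assms] by (simp add: power2_sum)
  finally show ?thesis
    by (simp add: L2_norm_nonneg power2_le_iff_abs_le)
qed

lemma L2_norm_triangle_diff:
  assumes "square_integrable M f" "square_integrable M g"
  shows "L2_norm M (\<lambda>x. f x - g x) \<le> L2_norm M f + L2_norm M g"
  using L2_norm_triangle[OF assms(1) square_integrable_cmult[OF assms(2), of "-1"]]
    L2_norm_cmult[of M "-1" g]
  by simp

lemma L2_norm_sum_le:
  "(\<And>i. i \<in> I \<Longrightarrow> square_integrable M (f i)) \<Longrightarrow>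
    L2_norm M (\<lambda>x. \<Sum>i\<in>I. f i x) \<le> (\<Sum>i\<in>I. L2_norm M (f i))"
proof (induction I rule: infinite_finite_induct)
  case (insert i I)
  then have "L2_norm M (\<lambda>x. f i x + (\<Sum>i\<in>I. f i x)) \<le> L2_norm M (f i) + L2_norm M (\<lambda>x. \<Sum>i\<in>I. f i x)"
    by (intro L2_norm_triangle square_integrable_sum) auto
  with insert show ?case by simp
qed (auto simp: L2_norm_def)

lemma SUP_partial_sum_abs_power2:
  fixes v :: "nat \<Rightarrow> real"
  assumes "summable (\<lambda>k. \<bar>v k\<bar>)"
  shows "(SUP N. ennreal ((\<Sum>k<N. \<bar>v k\<bar>)\<^sup>2)) = ennreal ((\<Sum>k. \<bar>v k\<bar>)\<^sup>2)"
proof (rule LIMSEQ_unique)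
  show "(\<lambda>N. ennreal ((\<Sum>k<N. \<bar>v k\<bar>)\<^sup>2)) \<longlonglongrightarrow> (SUP N. ennreal ((\<Sum>k<N. \<bar>v k\<bar>)\<^sup>2))"
    by (intro LIMSEQ_SUP incseq_SucI ennreal_leI power_mono) (auto intro: sum_nonneg)
  show "(\<lambda>N. ennreal ((\<Sum>k<N. \<bar>v k\<bar>)\<^sup>2)) \<longlonglongrightarrow> ennreal ((\<Sum>k. \<bar>v k\<bar>)\<^sup>2)"
    by (intro tendsto_ennrealI tendsto_power summable_LIMSEQ assms)
qed

lemma summable_abs_if_SUP_partial_sum_abs_power2_finite:
  fixes v :: "nat \<Rightarrow> real"
  assumes "(SUP N. ennreal ((\<Sum>k<N. \<bar>v k\<bar>)\<^sup>2)) \<noteq> \<infinity>"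
  shows "summable (\<lambda>k. \<bar>v k\<bar>)"
proof -
  have "(SUP N. ennreal ((\<Sum>k<N. \<bar>v k\<bar>)\<^sup>2)) < top"
    using assms by (simp only: infinity_ennreal_def less_top)
  then obtain r where r: "(SUP N. ennreal ((\<Sum>k<N. \<bar>v k\<bar>)\<^sup>2)) = ennreal r" "0 \<le> r"
    unfolding less_top_ennreal by blast
  have "(\<Sum>k<N. \<bar>v k\<bar>)\<^sup>2 \<le> r" for N
    using SUP_upper[of N UNIV "\<lambda>N. ennreal ((\<Sum>k<N. \<bar>v k\<bar>)\<^sup>2)"] r by (simp add: ennreal_le_iff)
  then have "(\<Sum>k<N. \<bar>v k\<bar>) \<le> sqrt r" for N
    by (simp add: real_le_rsqrt)
  then show ?thesis
    by (intro summableI_nonneg_bounded) auto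
qed

context
  fixes M :: "'a measure" and u :: "nat \<Rightarrow> 'a \<Rightarrow> real"
  assumes square_integrable_terms: "\<And>k. square_integrable M (u k)"
    and summable_L2_norms: "summable (\<lambda>k. L2_norm M (u k))"
begin

text \<open>Minkowski's inequality for the partial sums, and monotone convergence.\<close>
lemma nn_integral_SUP_partial_sum_abs_power2_le:
  "(\<integral>\<^sup>+t. (SUP N. ennreal ((\<Sum>k<N. \<bar>u k t\<bar>)\<^sup>2)) \<partial>M) \<le> ennreal ((\<Sum>k. L2_norm M (u k))\<^sup>2)"
proof -
  note [measurable] = square_integrable_measurable[OF square_integrable_terms]
  have "(\<integral>\<^sup>+t. (SUP N. ennreal ((\<Sum>k<N. \<bar>u k t\<bar>)\<^sup>2)) \<partial>M)
      = (SUP N. (\<integral>\<^sup>+t. ennreal ((\<Sum>k<N. \<bar>u k t\<bar>)\<^sup>2) \<partial>M))"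
    by (intro nn_integral_monotone_convergence_SUP incseq_SucI le_funI ennreal_leI power_mono)
       (auto intro: sum_nonneg)
  also have "\<dots> \<le> ennreal ((\<Sum>k. L2_norm M (u k))\<^sup>2)"
  proof (rule SUP_least)
    fix N
    have sq: "square_integrable M (\<lambda>t. \<Sum>k<N. \<bar>u k t\<bar>)"
      by (intro square_integrable_sum square_integrable_abs square_integrable_terms)
    have "L2_norm M (\<lambda>t. \<Sum>k<N. \<bar>u k t\<bar>) \<le> (\<Sum>k<N. L2_norm M (\<lambda>t. \<bar>u k t\<bar>))"
      by (intro L2_norm_sum_le square_integrable_abs square_integrable_terms)
    also have "\<dots> \<le> (\<Sum>k. L2_norm M (u k))"
      unfolding L2_norm_abs by (intro sum_le_suminf summable_L2_norms) (auto simp: L2_norm_nonneg)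
    finally show "(\<integral>\<^sup>+t. ennreal ((\<Sum>k<N. \<bar>u k t\<bar>)\<^sup>2) \<partial>M) \<le> ennreal ((\<Sum>k. L2_norm M (u k))\<^sup>2)"
      unfolding nn_integral_square_eq_L2_norm[OF sq]
      by (intro ennreal_leI power_mono L2_norm_nonneg)
  qed
  finally show ?thesis .
qed

lemma AE_summable_abs_terms: "AE t in M. summable (\<lambda>k. \<bar>u k t\<bar>)"
proof -
  note [measurable] = square_integrable_measurable[OF square_integrable_terms]
  have "AE t in M. (SUP N. ennreal ((\<Sum>k<N. \<bar>u k t\<bar>)\<^sup>2)) \<noteq> \<infinity>"
    using nn_integral_SUP_partial_sum_abs_power2_le
    by (intro nn_integral_PInf_AE) (measurable, auto simp: top_unique)
  then show ?thesis
    by eventually_elim (rule summable_abs_if_SUP_partial_sum_abs_power2_finite)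
qed

lemma square_integrable_suminf: "square_integrable M (\<lambda>t. \<Sum>k. u k t)"
  and L2_norm_suminf_le: "L2_norm M (\<lambda>t. \<Sum>k. u k t) \<le> (\<Sum>k. L2_norm M (u k))"
proof -
  note [measurable] = square_integrable_measurable[OF square_integrable_terms]
  have "AE t in M. ennreal ((\<Sum>k. u k t)\<^sup>2) \<le> (SUP N. ennreal ((\<Sum>k<N. \<bar>u k t\<bar>)\<^sup>2))"
    using AE_summable_abs_terms
  proof eventually_elim
    case (elim t)
    have "(\<Sum>k. u k t)\<^sup>2 \<le> (\<Sum>k. \<bar>u k t\<bar>)\<^sup>2"
      using summable_rabs[OF elim] by (simp add: power2_le_iff_abs_le)
    then show ?case
      by (simp add: SUP_partial_sum_abs_power2[OF elim])
  qed
  then have "(\<integral>\<^sup>+t. ennreal ((\<Sum>k. u k t)\<^sup>2) \<partial>M) \<le> (\<integral>\<^sup>+t. (SUP N. ennreal ((\<Sum>k<N. \<bar>u k t\<bar>)\<^sup>2)) \<partial>M)"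
    by (rule nn_integral_mono_AE)
  also note nn_integral_SUP_partial_sum_abs_power2_le
  finally show "square_integrable M (\<lambda>t. \<Sum>k. u k t)" "L2_norm M (\<lambda>t. \<Sum>k. u k t) \<le> (\<Sum>k. L2_norm M (u k))"
    by (intro square_integrable_nn_integral_bound suminf_nonneg summable_L2_norms L2_norm_nonneg;
        measurable)+
qed

end

text \<open>Completeness of \<open>L\<^sup>2\<close>, in the form of absolutely convergent series.\<close>
lemma L2_convergent_series:
  assumes u: "\<And>k. square_integrable M (u k)" and s: "summable (\<lambda>k. L2_norm M (u k))"
  shows "square_integrable M (\<lambda>t. \<Sum>k. u k t)"
    and "(\<lambda>n. L2_norm M (\<lambda>t. (\<Sum>k. u k t) - (\<Sum>k<n. u k t))) \<longlonglongrightarrow> 0"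
proof -
  note [measurable] = square_integrable_measurable[OF u]
  show sq: "square_integrable M (\<lambda>t. \<Sum>k. u k t)"
    by (rule square_integrable_suminf[OF u s])
  note [measurable] = square_integrable_measurable[OF sq]
  have s_shift: "summable (\<lambda>k. L2_norm M (u (k + n)))" for n
    by (rule summable_ignore_initial_segment[OF s])
  have tail: "L2_norm M (\<lambda>t. (\<Sum>k. u k t) - (\<Sum>k<n. u k t)) \<le> (\<Sum>k. L2_norm M (u (k + n)))" for n
  proof -
    have "AE t in M. (\<Sum>k. u k t) - (\<Sum>k<n. u k t) = (\<Sum>k. u (k + n) t)"
      using AE_summable_abs_terms[OF u s]
    proof eventually_elim
      case (elim t)
      show ?case
        using suminf_minus_initial_segment[OF summable_rabs_cancel[OF elim], of n] by simp
    qed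
    then have "L2_norm M (\<lambda>t. (\<Sum>k. u k t) - (\<Sum>k<n. u k t)) = L2_norm M (\<lambda>t. \<Sum>k. u (k + n) t)"
      by (intro L2_norm_cong_AE) auto
    also have "\<dots> \<le> (\<Sum>k. L2_norm M (u (k + n)))"
      by (rule L2_norm_suminf_le[OF u s_shift])
    finally show ?thesis .
  qed
  have "(\<lambda>n. \<Sum>k. L2_norm M (u (k + n))) \<longlonglongrightarrow> 0"
    using tendsto_diff[OF tendsto_const summable_LIMSEQ[OF s], of "\<Sum>k. L2_norm M (u k)"]
    by (simp add: suminf_minus_initial_segment[OF s])
  then show "(\<lambda>n. L2_norm M (\<lambda>t. (\<Sum>k. u k t) - (\<Sum>k<n. u k t))) \<longlonglongrightarrow> 0"
    by (rule Lim_null_comparison[rotated]) (use tail in \<open>simp add: L2_norm_nonneg\<close>)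
qed


section \<open>Integral operators with Schur-bounded kernels\<close>

definition integral_operator :: "'a measure \<Rightarrow> ('a \<Rightarrow> 'a \<Rightarrow> real) \<Rightarrow> ('a \<Rightarrow> real) \<Rightarrow> 'a \<Rightarrow> real" where
  "integral_operator M k f = (\<lambda>t. \<integral>s. k t s * f s \<partial>M)"

lemma integral_operator_cmult:
  "integral_operator M k (\<lambda>x. c * f x) = (\<lambda>t. c * integral_operator M k f t)"
  unfolding integral_operator_def by (simp add: mult.left_commute)

lemma integral_operator_divide:
  "integral_operator M k (\<lambda>x. f x / c) = (\<lambda>t. integral_operator M k f t / c)"
  using integral_operator_cmult[of M k "1 / c" f] by simp

locale schur_kernel = finite_measure M for M :: "'a measure" +
  fixes k :: "'a \<Rightarrow> 'a \<Rightarrow> real" and K :: real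
  assumes kernel_measurable[measurable]: "(\<lambda>x. k (fst x) (snd x)) \<in> borel_measurable (M \<Otimes>\<^sub>M M)"
    and kernel_nonneg: "0 \<le> k t s"
    and kernel_symmetric: "k t s = k s t"
    and row_integral_le: "t \<in> space M \<Longrightarrow> (\<integral>\<^sup>+s. k t s \<partial>M) \<le> ennreal K"
    and bound_nonneg: "0 \<le> K"
begin

interpretation P: pair_sigma_finite M M ..

lemma kernel_row_measurable[measurable]: "t \<in> space M \<Longrightarrow> k t \<in> borel_measurable M"
  using measurable_Pair2[OF kernel_measurable] by simp

definition majorant :: "('a \<Rightarrow> real) \<Rightarrow> 'a \<Rightarrow> ennreal" where
  "majorant f t = (\<integral>\<^sup>+s. ennreal (k t s * \<bar>f s\<bar>) \<partial>M)"

lemma majorant_measurable[measurable]: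
  assumes [measurable]: "f \<in> borel_measurable M"
  shows "majorant f \<in> borel_measurable M"
  unfolding majorant_def by measurable

lemma majorant_power2_le:
  assumes [measurable]: "f \<in> borel_measurable M" and t: "t \<in> space M"
  shows "(majorant f t)\<^sup>2 \<le> ennreal K * (\<integral>\<^sup>+s. ennreal (k t s * (f s)\<^sup>2) \<partial>M)"
proof -
  have "(majorant f t)\<^sup>2
      = (\<integral>\<^sup>+s. ennreal (sqrt (k t s)) * ennreal (sqrt (k t s) * \<bar>f s\<bar>) \<partial>M)\<^sup>2"
    unfolding majorant_def
    by (intro arg_cong[where f="\<lambda>x. x\<^sup>2"] nn_integral_cong)
       (simp add: ennreal_mult[symmetric] kernel_nonneg mult.assoc[symmetric] real_sqrt_mult[symmetric])
  also have "\<dots> \<le> (\<integral>\<^sup>+s. (ennreal (sqrt (k t s)))\<^sup>2 \<partial>M) *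
      (\<integral>\<^sup>+s. (ennreal (sqrt (k t s) * \<bar>f s\<bar>))\<^sup>2 \<partial>M)"
    using t by (intro Cauchy_Schwarz_nn_integral) measurable
  also have "\<dots> = (\<integral>\<^sup>+s. k t s \<partial>M) * (\<integral>\<^sup>+s. ennreal (k t s * (f s)\<^sup>2) \<partial>M)"
    by (intro arg_cong2[where f="(*)"] nn_integral_cong)
       (simp_all add: ennreal_power kernel_nonneg power_mult_distrib)
  also have "\<dots> \<le> ennreal K * (\<integral>\<^sup>+s. ennreal (k t s * (f s)\<^sup>2) \<partial>M)"
    using row_integral_le[OF t] by (intro mult_right_mono) auto
  finally show ?thesis .
qed

lemma nn_integral_majorant_power2_le:
  assumes [measurable]: "f \<in> borel_measurable M"
  shows "(\<integral>\<^sup>+t. (majorant f t)\<^sup>2 \<partial>M) \<le> ennreal (K\<^sup>2) * (\<integral>\<^sup>+s. ennreal ((f s)\<^sup>2) \<partial>M)"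
proof -
  have "(\<integral>\<^sup>+t. (majorant f t)\<^sup>2 \<partial>M)
      \<le> (\<integral>\<^sup>+t. ennreal K * (\<integral>\<^sup>+s. ennreal (k t s * (f s)\<^sup>2) \<partial>M) \<partial>M)"
    by (intro nn_integral_mono majorant_power2_le) auto
  also have "\<dots> = ennreal K * (\<integral>\<^sup>+t. (\<integral>\<^sup>+s. ennreal (k t s * (f s)\<^sup>2) \<partial>M) \<partial>M)"
    by (rule nn_integral_cmult) measurable
  also have "(\<integral>\<^sup>+t. (\<integral>\<^sup>+s. ennreal (k t s * (f s)\<^sup>2) \<partial>M) \<partial>M)
      = (\<integral>\<^sup>+s. (\<integral>\<^sup>+t. ennreal (k t s * (f s)\<^sup>2) \<partial>M) \<partial>M)"
    by (rule P.Fubini'[symmetric]) measurable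
  also have "\<dots> = (\<integral>\<^sup>+s. ennreal ((f s)\<^sup>2) * (\<integral>\<^sup>+t. k s t \<partial>M) \<partial>M)"
    by (intro nn_integral_cong)
       (simp add: nn_integral_cmult[symmetric] ennreal_mult'[symmetric] kernel_nonneg
         kernel_symmetric mult.commute)
  also have "\<dots> \<le> (\<integral>\<^sup>+s. ennreal ((f s)\<^sup>2) * ennreal K \<partial>M)"
    by (intro nn_integral_mono mult_left_mono row_integral_le) auto
  also have "\<dots> = ennreal K * (\<integral>\<^sup>+s. ennreal ((f s)\<^sup>2) \<partial>M)"
    by (subst nn_integral_cmult[symmetric]) (auto simp: mult.commute)
  finally show ?thesis
    by (simp add: ennreal_mult bound_nonneg power2_eq_square mult.assoc mult_left_mono)
qed

lemma nn_integral_majorant_power2_L2_norm_le: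
  "square_integrable M f \<Longrightarrow>
    (\<integral>\<^sup>+t. (majorant f t)\<^sup>2 \<partial>M) \<le> ennreal ((K * L2_norm M f)\<^sup>2)"
  using nn_integral_majorant_power2_le[OF square_integrable_measurable, of f]
  by (simp add: nn_integral_square_eq_L2_norm ennreal_mult power_mult_distrib)

lemma nn_integral_abs_mult_majorant_finite:
  assumes f: "square_integrable M f" and g: "square_integrable M g"
  shows "(\<integral>\<^sup>+t. ennreal \<bar>g t\<bar> * majorant f t \<partial>M) < \<infinity>"
proof -
  note [measurable] = square_integrable_measurable[OF f] square_integrable_measurable[OF g]
  have "(\<integral>\<^sup>+t. ennreal \<bar>g t\<bar> * majorant f t \<partial>M)\<^sup>2
      \<le> (\<integral>\<^sup>+t. (ennreal \<bar>g t\<bar>)\<^sup>2 \<partial>M) * (\<integral>\<^sup>+t. (majorant f t)\<^sup>2 \<partial>M)"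
    by (rule Cauchy_Schwarz_nn_integral) measurable
  also have "\<dots> \<le> ennreal ((L2_norm M g)\<^sup>2) * ennreal ((K * L2_norm M f)\<^sup>2)"
    using nn_integral_square_eq_L2_norm[OF g] nn_integral_majorant_power2_L2_norm_le[OF f]
    by (intro mult_mono) (auto simp: ennreal_power)
  also have "\<dots> < \<infinity>"
    by (simp add: ennreal_mult_less_top)
  finally show ?thesis
    by (simp add: power_less_top_ennreal)
qed

lemma AE_majorant_finite:
  assumes "square_integrable M f"
  shows "AE t in M. majorant f t < \<infinity>"
proof -
  note [measurable] = square_integrable_measurable[OF assms]
  have "AE t in M. (majorant f t)\<^sup>2 \<noteq> \<infinity>"
    using nn_integral_majorant_power2_L2_norm_le[OF assms]
    by (intro nn_integral_PInf_AE) (auto simp: top_unique)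
  then show ?thesis
    by (auto simp: top.not_eq_extremum power_less_top_ennreal)
qed

lemma integrable_kernel_mult:
  assumes [measurable]: "f \<in> borel_measurable M" and "t \<in> space M" "majorant f t < \<infinity>"
  shows "integrable M (\<lambda>s. k t s * f s)"
  using assms by (simp add: integrable_iff_bounded majorant_def abs_mult kernel_nonneg)

lemma AE_integrable_kernel_mult:
  assumes "square_integrable M f"
  shows "AE t in M. integrable M (\<lambda>s. k t s * f s)"
  using AE_majorant_finite[OF assms] AE_space
  by eventually_elim (intro integrable_kernel_mult square_integrable_measurable[OF assms])

lemma integral_operator_measurable[measurable]:
  assumes [measurable]: "f \<in> borel_measurable M"
  shows "integral_operator M k f \<in> borel_measurable M"
  unfolding integral_operator_def by measurable

lemma abs_integral_operator_le_majorant: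
  assumes "t \<in> space M"
  shows "ennreal \<bar>integral_operator M k f t\<bar> \<le> majorant f t"
proof (cases "integrable M (\<lambda>s. k t s * f s)")
  case True
  then show ?thesis
    unfolding integral_operator_def majorant_def
    using integral_norm_bound_ennreal[OF True] by (simp add: abs_mult kernel_nonneg)
qed (simp add: integral_operator_def not_integrable_integral_eq)

lemma square_integrable_integral_operator:
  assumes "square_integrable M f"
  shows "square_integrable M (integral_operator M k f)"
    and "L2_norm M (integral_operator M k f) \<le> K * L2_norm M f"
proof -
  note [measurable] = square_integrable_measurable[OF assms]
  have "(\<integral>\<^sup>+t. ennreal ((integral_operator M k f t)\<^sup>2) \<partial>M) \<le> (\<integral>\<^sup>+t. (majorant f t)\<^sup>2 \<partial>M)"
  proof (intro nn_integral_mono)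
    fix t assume "t \<in> space M"
    then have "(ennreal \<bar>integral_operator M k f t\<bar>)\<^sup>2 \<le> (majorant f t)\<^sup>2"
      by (intro power_mono abs_integral_operator_le_majorant) auto
    then show "ennreal ((integral_operator M k f t)\<^sup>2) \<le> (majorant f t)\<^sup>2"
      by (simp add: ennreal_power)
  qed
  also have "\<dots> \<le> ennreal ((K * L2_norm M f)\<^sup>2)"
    by (rule nn_integral_majorant_power2_L2_norm_le[OF assms])
  finally show "square_integrable M (integral_operator M k f)"
      "L2_norm M (integral_operator M k f) \<le> K * L2_norm M f"
    by (intro square_integrable_nn_integral_bound mult_nonneg_nonneg bound_nonneg L2_norm_nonneg;
        measurable)+
qed

lemma integral_operator_add_AE:
  assumes "square_integrable M f" "square_integrable M g"
  shows "AE t in M. integral_operator M k (\<lambda>x. f x + g x) t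
    = integral_operator M k f t + integral_operator M k g t"
  using AE_integrable_kernel_mult[OF assms(1)] AE_integrable_kernel_mult[OF assms(2)]
  by eventually_elim (simp add: integral_operator_def distrib_left)

lemma integral_operator_diff_AE:
  assumes "square_integrable M f" "square_integrable M g"
  shows "AE t in M. integral_operator M k (\<lambda>x. f x - g x) t
    = integral_operator M k f t - integral_operator M k g t"
  using AE_integrable_kernel_mult[OF assms(1)] AE_integrable_kernel_mult[OF assms(2)]
  by eventually_elim (simp add: integral_operator_def right_diff_distrib)

lemma integrable_kernel_product:
  assumes f: "square_integrable M f" and g: "square_integrable M g"
  shows "integrable (M \<Otimes>\<^sub>M M) (\<lambda>(t, s). k t s * f s * g t)"
proof (rule integrableI_bounded)
  note [measurable] = square_integrable_measurable[OF f] square_integrable_measurable[OF g]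
  show "(\<lambda>(t, s). k t s * f s * g t) \<in> borel_measurable (M \<Otimes>\<^sub>M M)"
    by measurable
  have "(\<integral>\<^sup>+x. ennreal (norm ((\<lambda>(t, s). k t s * f s * g t) x)) \<partial>(M \<Otimes>\<^sub>M M))
      = (\<integral>\<^sup>+t. (\<integral>\<^sup>+s. ennreal \<bar>k t s * f s * g t\<bar> \<partial>M) \<partial>M)"
  proof -
    have "(\<lambda>x. ennreal (norm ((\<lambda>(t, s). k t s * f s * g t) x))) \<in> borel_measurable (M \<Otimes>\<^sub>M M)"
      by measurable
    from nn_integral_fst[OF this] show ?thesis by simp
  qed
  also have "\<dots> = (\<integral>\<^sup>+t. ennreal \<bar>g t\<bar> * majorant f t \<partial>M)"
    unfolding majorant_def
    by (intro nn_integral_cong, subst nn_integral_cmult[symmetric])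
       (auto simp: abs_mult kernel_nonneg ennreal_mult[symmetric] mult_ac intro!: nn_integral_cong)
  also have "\<dots> < \<infinity>"
    by (rule nn_integral_abs_mult_majorant_finite[OF f g])
  finally show "(\<integral>\<^sup>+x. ennreal (norm ((\<lambda>(t, s). k t s * f s * g t) x)) \<partial>(M \<Otimes>\<^sub>M M)) < \<infinity>" .
qed

lemma integral_operator_self_adjoint:
  assumes "square_integrable M f" "square_integrable M g"
  shows "L2_inner M (integral_operator M k f) g = L2_inner M f (integral_operator M k g)"
proof -
  have "L2_inner M (integral_operator M k f) g = (\<integral>t. (\<integral>s. k t s * f s * g t \<partial>M) \<partial>M)"
    unfolding L2_inner_def integral_operator_def by simp
  also have "\<dots> = (\<integral>s. (\<integral>t. k t s * f s * g t \<partial>M) \<partial>M)"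
    by (rule P.Fubini_integral[symmetric, OF integrable_kernel_product[OF assms]])
  also have "\<dots> = (\<integral>s. f s * (\<integral>t. k s t * g t \<partial>M) \<partial>M)"
  proof (rule Bochner_Integration.integral_cong[OF refl])
    fix s
    have "(\<integral>t. k t s * f s * g t \<partial>M) = (\<integral>t. f s * (k s t * g t) \<partial>M)"
      by (simp add: kernel_symmetric[of _ s] mult_ac)
    then show "(\<integral>t. k t s * f s * g t \<partial>M) = f s * (\<integral>t. k s t * g t \<partial>M)"
      by simp
  qed
  also have "\<dots> = L2_inner M f (integral_operator M k g)"
    unfolding L2_inner_def integral_operator_def ..
  finally show ?thesis .
qed

lemma L2_inner_integral_operator_add_power2:
  assumes f: "square_integrable M f" and g: "square_integrable M g"
  shows "L2_inner M (integral_operator M k (\<lambda>x. f x + a * g x)) (\<lambda>x. f x + a * g x)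
    = L2_inner M (integral_operator M k f) f + 2 * a * L2_inner M (integral_operator M k f) g
      + a\<^sup>2 * L2_inner M (integral_operator M k g) g"
proof -
  note [measurable] = square_integrable_measurable[OF f] square_integrable_measurable[OF g]
  have Kf: "square_integrable M (integral_operator M k f)"
    and Kg: "square_integrable M (integral_operator M k g)"
    using square_integrable_integral_operator f g by auto
  have fg: "square_integrable M (\<lambda>x. f x + a * g x)"
    by (intro square_integrable_add square_integrable_cmult f g)
  have "L2_inner M (integral_operator M k (\<lambda>x. f x + a * g x)) (\<lambda>x. f x + a * g x)
      = L2_inner M (\<lambda>t. integral_operator M k f t + a * integral_operator M k g t) (\<lambda>x. f x + a * g x)"
    using integral_operator_add_AE[OF f square_integrable_cmult[OF g, of a]]
    by (intro L2_inner_cong_AE) (auto simp: integral_operator_cmult)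
  also have "\<dots> = L2_inner M (integral_operator M k f) (\<lambda>x. f x + a * g x)
      + a * L2_inner M (integral_operator M k g) (\<lambda>x. f x + a * g x)"
    using Kf Kg fg by (simp add: L2_inner_add_left square_integrable_cmult L2_inner_cmult_left)
  also have "L2_inner M (integral_operator M k f) (\<lambda>x. f x + a * g x)
      = L2_inner M (integral_operator M k f) f + a * L2_inner M (integral_operator M k f) g"
    using Kf f g by (subst (1 2 3) L2_inner_commute)
      (simp add: L2_inner_add_left square_integrable_cmult L2_inner_cmult_left)
  also have "L2_inner M (integral_operator M k g) (\<lambda>x. f x + a * g x)
      = L2_inner M (integral_operator M k g) f + a * L2_inner M (integral_operator M k g) g"
    using Kg f g by (subst (1 2 3) L2_inner_commute)
      (simp add: L2_inner_add_left square_integrable_cmult L2_inner_cmult_left)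
  also have "L2_inner M (integral_operator M k g) f = L2_inner M (integral_operator M k f) g"
    using integral_operator_self_adjoint[OF g f] by (simp add: L2_inner_commute)
  finally show ?thesis
    by (simp add: algebra_simps power2_eq_square)
qed

end


section \<open>Positive operators and the Neumann series\<close>

locale psd_schur_kernel = schur_kernel +
  assumes positive_semidefinite:
    "square_integrable M f \<Longrightarrow> 0 \<le> L2_inner M (integral_operator M k f) f"
begin

definition op_norm :: real where
  "op_norm = Sup {L2_norm M (integral_operator M k f) | f. square_integrable M f \<and> L2_norm M f \<le> 1}"

lemma L2_norm_integral_operator_le_op_norm_of_unit:
  assumes "square_integrable M f" "L2_norm M f \<le> 1"
  shows "L2_norm M (integral_operator M k f) \<le> op_norm"
  unfolding op_norm_def
proof (rule cSup_upper)
  show "bdd_above {L2_norm M (integral_operator M k f) | f. square_integrable M f \<and> L2_norm M f \<le> 1}"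
  proof (rule bdd_aboveI)
    fix x assume "x \<in> {L2_norm M (integral_operator M k f) | f. square_integrable M f \<and> L2_norm M f \<le> 1}"
    then obtain f where "x = L2_norm M (integral_operator M k f)" "square_integrable M f" "L2_norm M f \<le> 1"
      by auto
    then show "x \<le> K"
      using square_integrable_integral_operator(2)[of f] bound_nonneg
      by (meson mult_left_le order_trans)
  qed
qed (use assms in auto)

lemma op_norm_nonneg: "0 \<le> op_norm"
  using L2_norm_integral_operator_le_op_norm_of_unit[of "\<lambda>x. 0"] L2_norm_nonneg[of M]
  by (auto simp: square_integrable_def L2_norm_def integral_operator_def)

lemma L2_norm_integral_operator_le:
  assumes f: "square_integrable M f"
  shows "L2_norm M (integral_operator M k f) \<le> op_norm * L2_norm M f"
proof (cases "L2_norm M f = 0")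
  case True
  then show ?thesis
    using square_integrable_integral_operator(2)[OF f] L2_norm_nonneg[of M "integral_operator M k f"]
    by simp
next
  case False
  then have pos: "0 < L2_norm M f"
    using L2_norm_nonneg[of M f] by simp
  have "L2_norm M (integral_operator M k (\<lambda>x. (1 / L2_norm M f) * f x)) \<le> op_norm"
    using pos
    by (intro L2_norm_integral_operator_le_op_norm_of_unit square_integrable_cmult f)
       (simp add: L2_norm_divide)
  then show ?thesis
    using pos by (simp add: integral_operator_divide L2_norm_divide field_simps)
qed

lemma quadratic_form_cauchy_schwarz:
  assumes "square_integrable M f" "square_integrable M g"
  shows "(L2_inner M (integral_operator M k f) g)\<^sup>2
    \<le> L2_inner M (integral_operator M k f) f * L2_inner M (integral_operator M k g) g"
  by (rule quadratic_nonneg_imp_discriminant_le)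
     (metis L2_inner_integral_operator_add_power2[OF assms] positive_semidefinite
       square_integrable_add square_integrable_cmult assms)

text \<open>Cauchy--Schwarz for the form \<open>\<langle>K\<cdot>, \<cdot>\<rangle>\<close>, applied to \<open>f\<close> and \<open>Kf\<close>.\<close>
lemma L2_norm_integral_operator_power2_le:
  assumes f: "square_integrable M f"
  shows "(L2_norm M (integral_operator M k f))\<^sup>2 \<le> op_norm * L2_inner M (integral_operator M k f) f"
proof -
  define Kf where "Kf = integral_operator M k f"
  have Kf: "square_integrable M Kf"
    unfolding Kf_def using square_integrable_integral_operator f by auto
  have "L2_inner M (integral_operator M k Kf) Kf \<le> L2_norm M (integral_operator M k Kf) * L2_norm M Kf"
    using L2_cauchy_schwarz[OF square_integrable_integral_operator(1)[OF Kf] Kf] by simp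
  also have "\<dots> \<le> op_norm * (L2_norm M Kf)\<^sup>2"
    using mult_right_mono[OF L2_norm_integral_operator_le[OF Kf] L2_norm_nonneg]
    by (simp add: power2_eq_square mult.assoc)
  finally have KKf: "L2_inner M (integral_operator M k Kf) Kf \<le> op_norm * (L2_norm M Kf)\<^sup>2" .
  have "((L2_norm M Kf)\<^sup>2)\<^sup>2 = (L2_inner M Kf Kf)\<^sup>2"
    by (simp add: L2_inner_self)
  also have "\<dots> \<le> L2_inner M Kf f * L2_inner M (integral_operator M k Kf) Kf"
    unfolding Kf_def by (rule quadratic_form_cauchy_schwarz[OF f Kf[unfolded Kf_def]])
  also have "\<dots> \<le> L2_inner M Kf f * (op_norm * (L2_norm M Kf)\<^sup>2)"
    unfolding Kf_def by (intro mult_left_mono KKf[unfolded Kf_def] positive_semidefinite f)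
  finally have *: "(L2_norm M Kf)\<^sup>2 * (L2_norm M Kf)\<^sup>2 \<le> (op_norm * L2_inner M Kf f) * (L2_norm M Kf)\<^sup>2"
    by (simp add: power2_eq_square[of "(L2_norm M Kf)\<^sup>2"] mult_ac)
  show ?thesis
  proof (cases "L2_norm M Kf = 0")
    case True
    then show ?thesis
      using positive_semidefinite[OF f] op_norm_nonneg by (simp add: Kf_def)
  next
    case False
    then have "0 < (L2_norm M Kf)\<^sup>2"
      by simp
    from mult_right_le_imp_le[OF * this] show ?thesis
      by (simp add: Kf_def)
  qed
qed

definition neumann_shift :: real where
  "neumann_shift = op_norm / 2"

definition contraction :: "('a \<Rightarrow> real) \<Rightarrow> 'a \<Rightarrow> real" where
  "contraction f = (\<lambda>t. neumann_shift * f t - integral_operator M k f t)"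

definition id_plus :: "('a \<Rightarrow> real) \<Rightarrow> 'a \<Rightarrow> real" where
  "id_plus f = (\<lambda>t. f t + integral_operator M k f t)"

definition neumann_partial_sum :: "('a \<Rightarrow> real) \<Rightarrow> nat \<Rightarrow> 'a \<Rightarrow> real" where
  "neumann_partial_sum g n = (\<lambda>t. \<Sum>j<n. (contraction ^^ j) g t / (1 + neumann_shift) ^ (j + 1))"

lemma neumann_shift_nonneg: "0 \<le> neumann_shift"
  using op_norm_nonneg by (simp add: neumann_shift_def)

lemma square_integrable_contraction: "square_integrable M f \<Longrightarrow> square_integrable M (contraction f)"
  unfolding contraction_def
  by (intro square_integrable_diff square_integrable_cmult square_integrable_integral_operator)

lemma square_integrable_id_plus: "square_integrable M f \<Longrightarrow> square_integrable M (id_plus f)"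
  unfolding id_plus_def by (intro square_integrable_add square_integrable_integral_operator)

lemma square_integrable_contraction_power:
  "square_integrable M g \<Longrightarrow> square_integrable M ((contraction ^^ n) g)"
  by (induction n) (auto intro: square_integrable_contraction)

lemma square_integrable_neumann_partial_sum:
  "square_integrable M g \<Longrightarrow> square_integrable M (neumann_partial_sum g n)"
  unfolding neumann_partial_sum_def
  by (intro square_integrable_sum square_integrable_divide square_integrable_contraction_power)

text \<open>The spectrum of the positive operator \<open>K\<close> lies in \<open>[0, \<parallel>K\<parallel>]\<close>, so that of
  \<open>c I - K\<close> with \<open>c = \<parallel>K\<parallel>/2\<close> lies in \<open>[-c, c]\<close>; concretely,
  \<open>\<parallel>cf - Kf\<parallel>\<^sup>2 = c\<^sup>2\<parallel>f\<parallel>\<^sup>2 - (2c\<langle>Kf, f\<rangle> - \<parallel>Kf\<parallel>\<^sup>2)\<close> with the bracket nonnegative.\<close>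
lemma L2_norm_contraction_le:
  assumes f: "square_integrable M f"
  shows "L2_norm M (contraction f) \<le> neumann_shift * L2_norm M f"
proof -
  let ?c = neumann_shift
  have Kf: "square_integrable M (integral_operator M k f)"
    using square_integrable_integral_operator f by auto
  have "(L2_norm M (contraction f))\<^sup>2
      = (L2_norm M (\<lambda>t. ?c * f t + (-1) * integral_operator M k f t))\<^sup>2"
    by (simp add: contraction_def)
  also have "\<dots> = ?c\<^sup>2 * (L2_norm M f)\<^sup>2 - 2 * ?c * L2_inner M (integral_operator M k f) f
      + (L2_norm M (integral_operator M k f))\<^sup>2"
    using L2_norm_add_power2[OF square_integrable_cmult[OF f, of ?c] Kf, of "-1"] neumann_shift_nonneg
    by (simp add: L2_norm_cmult L2_inner_cmult_left power_mult_distrib L2_inner_commute[of M f])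
  also have "\<dots> \<le> ?c\<^sup>2 * (L2_norm M f)\<^sup>2"
    using L2_norm_integral_operator_power2_le[OF f] by (simp add: neumann_shift_def)
  also have "\<dots> = (?c * L2_norm M f)\<^sup>2"
    by (simp add: power_mult_distrib)
  finally show ?thesis
    using neumann_shift_nonneg by (simp add: L2_norm_nonneg power2_le_iff_abs_le)
qed

lemma L2_norm_contraction_power_le:
  "square_integrable M g \<Longrightarrow> L2_norm M ((contraction ^^ n) g) \<le> neumann_shift ^ n * L2_norm M g"
proof (induction n)
  case (Suc n)
  have "L2_norm M ((contraction ^^ Suc n) g) \<le> neumann_shift * L2_norm M ((contraction ^^ n) g)"
    using L2_norm_contraction_le[OF square_integrable_contraction_power[OF Suc.prems]] by simp
  also have "\<dots> \<le> neumann_shift * (neumann_shift ^ n * L2_norm M g)"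
    using Suc neumann_shift_nonneg by (intro mult_left_mono) auto
  finally show ?case by simp
qed simp

lemma L2_norm_id_plus_le:
  assumes f: "square_integrable M f"
  shows "L2_norm M (id_plus f) \<le> (1 + op_norm) * L2_norm M f"
  using L2_norm_triangle[OF f square_integrable_integral_operator(1)[OF f]]
    L2_norm_integral_operator_le[OF f]
  by (simp add: id_plus_def algebra_simps)

lemma L2_norm_le_id_plus:
  assumes f: "square_integrable M f"
  shows "L2_norm M f \<le> L2_norm M (id_plus f)"
proof -
  have "(L2_norm M f)\<^sup>2 \<le> L2_inner M f f + L2_inner M (integral_operator M k f) f"
    using positive_semidefinite[OF f] by (simp add: L2_inner_self)
  also have "\<dots> = L2_inner M (id_plus f) f"
    unfolding id_plus_def by (simp add: L2_inner_add_left f square_integrable_integral_operator)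
  also have "\<dots> \<le> L2_norm M (id_plus f) * L2_norm M f"
    using L2_cauchy_schwarz[OF square_integrable_id_plus[OF f] f] by simp
  finally have "L2_norm M f * L2_norm M f \<le> L2_norm M (id_plus f) * L2_norm M f"
    by (simp add: power2_eq_square)
  moreover have "0 \<le> L2_norm M (id_plus f)"
    by (rule L2_norm_nonneg)
  ultimately show ?thesis
    using L2_norm_nonneg[of M f] mult_right_le_imp_le[of "L2_norm M f" "L2_norm M f"]
    by (cases "L2_norm M f = 0") auto
qed

lemma id_plus_diff_AE:
  assumes "square_integrable M f" "square_integrable M g"
  shows "AE t in M. id_plus (\<lambda>x. f x - g x) t = id_plus f t - id_plus g t"
  using integral_operator_diff_AE[OF assms] by eventually_elim (simp add: id_plus_def)

lemma id_plus_injective_AE: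
  assumes f: "square_integrable M f" and g: "square_integrable M g"
    and eq: "AE t in M. id_plus f t = id_plus g t"
  shows "AE t in M. f t = g t"
proof -
  have d: "square_integrable M (\<lambda>x. f x - g x)"
    by (rule square_integrable_diff[OF f g])
  have "AE t in M. id_plus (\<lambda>x. f x - g x) t = 0"
    using id_plus_diff_AE[OF f g] eq by eventually_elim simp
  then have "L2_norm M (id_plus (\<lambda>x. f x - g x)) = 0"
    using L2_norm_eq_0_iff[OF square_integrable_id_plus[OF d]] by simp
  then have "L2_norm M (\<lambda>x. f x - g x) = 0"
    using L2_norm_le_id_plus[OF d] L2_norm_nonneg[of M "\<lambda>x. f x - g x"] by simp
  then show ?thesis
    using L2_norm_eq_0_iff[OF d] by simp
qed

text \<open>Writing \<open>A = c I - K\<close>, we have \<open>I + K = (1 + c) I - A\<close>, so applying \<open>I + K\<close> to the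
  partial sums of \<open>\<Sum>\<^sub>j A\<^sup>j g / (1 + c)\<^sup>j\<^sup>+\<^sup>1\<close> telescopes.\<close>
lemma id_plus_neumann_partial_sum_AE:
  assumes g: "square_integrable M g"
  shows "AE t in M. id_plus (neumann_partial_sum g n) t
    = g t - (contraction ^^ n) g t / (1 + neumann_shift) ^ n"
proof (induction n)
  case 0
  show ?case
    by (simp add: neumann_partial_sum_def id_plus_def integral_operator_def)
next
  case (Suc n)
  let ?c = neumann_shift and ?A = "contraction ^^ n"
  define u where "u = (\<lambda>t. ?A g t / (1 + ?c) ^ (n + 1))"
  have S_Suc: "neumann_partial_sum g (Suc n) = (\<lambda>t. neumann_partial_sum g n t + u t)"
    by (simp add: neumann_partial_sum_def u_def)
  have u: "square_integrable M u"
    unfolding u_def by (intro square_integrable_divide square_integrable_contraction_power g)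
  have "1 + ?c \<noteq> 0"
    using neumann_shift_nonneg by simp
  have u_step: "u t + integral_operator M k u t
      = ?A g t / (1 + ?c) ^ n - (contraction ^^ Suc n) g t / (1 + ?c) ^ Suc n" for t
  proof -
    have "u t + integral_operator M k u t = (?A g t + integral_operator M k (?A g) t) / (1 + ?c) ^ (n + 1)"
      by (simp add: u_def integral_operator_divide add_divide_distrib)
    also have "?A g t + integral_operator M k (?A g) t = (1 + ?c) * ?A g t - (contraction ^^ Suc n) g t"
      by (simp add: contraction_def algebra_simps)
    finally show ?thesis
      using \<open>1 + ?c \<noteq> 0\<close> by (simp add: diff_divide_distrib)
  qed
  show ?case
    using Suc integral_operator_add_AE[OF square_integrable_neumann_partial_sum[OF g] u, of n]
  proof eventually_elim
    case (elim t)
    then have "id_plus (neumann_partial_sum g (Suc n)) t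
        = id_plus (neumann_partial_sum g n) t + (u t + integral_operator M k u t)"
      by (simp add: S_Suc id_plus_def)
    then show ?case
      by (simp only: elim(1) u_step) simp?
  qed
qed

lemma neumann_series_converges:
  assumes g: "square_integrable M g"
  obtains h where "square_integrable M h"
    and "(\<lambda>n. L2_norm M (\<lambda>t. h t - neumann_partial_sum g n t)) \<longlonglongrightarrow> 0"
proof -
  let ?c = neumann_shift
  define u where "u j = (\<lambda>t. (contraction ^^ j) g t / (1 + ?c) ^ (j + 1))" for j
  define q where "q = ?c / (1 + ?c)"
  have q: "0 \<le> q" "q < 1"
    using neumann_shift_nonneg by (auto simp: q_def)
  have u: "square_integrable M (u j)" for j
    unfolding u_def by (intro square_integrable_divide square_integrable_contraction_power g)
  have u_le: "L2_norm M (u j) \<le> L2_norm M g / (1 + ?c) * q ^ j" for j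
  proof -
    have "L2_norm M (u j) \<le> ?c ^ j * L2_norm M g / (1 + ?c) ^ (j + 1)"
      unfolding u_def L2_norm_divide using neumann_shift_nonneg
      by (simp add: divide_right_mono L2_norm_contraction_power_le[OF g])
    also have "\<dots> = L2_norm M g / (1 + ?c) * q ^ j"
      by (simp add: q_def power_divide field_simps)
    finally show ?thesis .
  qed
  have "summable (\<lambda>j. L2_norm M (u j))"
    by (rule summable_comparison_test[where g="\<lambda>j. L2_norm M g / (1 + ?c) * q ^ j"])
      (use q u_le in \<open>auto intro!: summable_mult summable_geometric simp: L2_norm_nonneg\<close>)
  from L2_convergent_series[OF u this] show ?thesis
    by (intro that[of "\<lambda>t. \<Sum>j. u j t"]) (simp_all add: neumann_partial_sum_def u_def)
qed

text \<open>By the telescoping identity, the residual of the \<open>n\<close>-th partial sum has norm at most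
  \<open>(c / (1 + c))\<^sup>n \<parallel>g\<parallel>\<close>.\<close>
lemma neumann_series_solves:
  assumes g: "square_integrable M g"
  obtains h where "square_integrable M h" "AE t in M. id_plus h t = g t"
    and "(\<lambda>n. L2_norm M (\<lambda>t. neumann_partial_sum g n t - h t)) \<longlonglongrightarrow> 0"
proof -
  let ?c = neumann_shift and ?S = "neumann_partial_sum g"
  obtain h where h: "square_integrable M h"
    and conv: "(\<lambda>n. L2_norm M (\<lambda>t. h t - ?S n t)) \<longlonglongrightarrow> 0"
    using neumann_series_converges[OF g] by blast
  note [measurable] = square_integrable_measurable[OF g] square_integrable_measurable[OF h]
    square_integrable_measurable[OF square_integrable_id_plus[OF h]]
  have bound: "L2_norm M (\<lambda>t. id_plus h t - g t)
      \<le> (1 + op_norm) * L2_norm M (\<lambda>t. h t - ?S n t) + (?c / (1 + ?c)) ^ n * L2_norm M g" for n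
  proof -
    have d: "square_integrable M (\<lambda>t. h t - ?S n t)"
      by (intro square_integrable_diff h square_integrable_neumann_partial_sum g)
    have A: "square_integrable M (\<lambda>t. (contraction ^^ n) g t / (1 + ?c) ^ n)"
      by (intro square_integrable_divide square_integrable_contraction_power g)
    note [measurable] = square_integrable_measurable[OF square_integrable_id_plus[OF d]]
      square_integrable_measurable[OF A]
    have "L2_norm M (\<lambda>t. id_plus h t - g t)
        = L2_norm M (\<lambda>t. id_plus (\<lambda>t. h t - ?S n t) t - (contraction ^^ n) g t / (1 + ?c) ^ n)"
    proof (rule L2_norm_cong_AE)
      show "AE t in M. id_plus h t - g t
          = id_plus (\<lambda>t. h t - ?S n t) t - (contraction ^^ n) g t / (1 + ?c) ^ n"
        using id_plus_diff_AE[OF h square_integrable_neumann_partial_sum[OF g], of n]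
          id_plus_neumann_partial_sum_AE[OF g, of n]
        by eventually_elim simp
    qed measurable
    also have "\<dots> \<le> L2_norm M (id_plus (\<lambda>t. h t - ?S n t)) + L2_norm M ((contraction ^^ n) g) / (1 + ?c) ^ n"
      using L2_norm_triangle_diff[OF square_integrable_id_plus[OF d] A] neumann_shift_nonneg
      by (simp add: L2_norm_divide)
    also have "\<dots> \<le> (1 + op_norm) * L2_norm M (\<lambda>t. h t - ?S n t) + ?c ^ n * L2_norm M g / (1 + ?c) ^ n"
    proof (rule add_mono)
      show "L2_norm M ((contraction ^^ n) g) / (1 + ?c) ^ n \<le> ?c ^ n * L2_norm M g / (1 + ?c) ^ n"
        using neumann_shift_nonneg
        by (intro divide_right_mono L2_norm_contraction_power_le g) simp
    qed (rule L2_norm_id_plus_le[OF d])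
    finally show ?thesis
      by (simp add: power_divide)
  qed
  have "norm (?c / (1 + ?c)) < 1"
    using neumann_shift_nonneg by simp
  then have "(\<lambda>n. (1 + op_norm) * L2_norm M (\<lambda>t. h t - ?S n t) + (?c / (1 + ?c)) ^ n * L2_norm M g)
      \<longlonglongrightarrow> 0"
    by (intro tendsto_add_zero tendsto_mult_right_zero tendsto_mult_left_zero conv LIMSEQ_power_zero)
  then have "L2_norm M (\<lambda>t. id_plus h t - g t) \<le> 0"
    by (rule LIMSEQ_le_const) (use bound in blast)
  then have "L2_norm M (\<lambda>t. id_plus h t - g t) = 0"
    using L2_norm_nonneg[of M] by (rule antisym)
  then have "AE t in M. id_plus h t - g t = 0"
    using L2_norm_eq_0_iff[OF square_integrable_diff[OF square_integrable_id_plus[OF h] g]] by simp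
  then have "AE t in M. id_plus h t = g t"
    by eventually_elim simp
  with h conv show ?thesis
    by (intro that[of h]) (simp_all add: L2_norm_minus_commute)
qed

end

section \<open>Gram kernels and exponential kernels\<close>

lemma integrable_bounded_mult:
  fixes f g :: "'a \<Rightarrow> real"
  assumes f: "integrable M f" and [measurable]: "g \<in> borel_measurable M"
    and bound: "\<And>x. x \<in> space M \<Longrightarrow> \<bar>g x\<bar> \<le> B"
  shows "integrable M (\<lambda>x. g x * f x)"
proof (rule Bochner_Integration.integrable_bound)
  have [measurable]: "f \<in> borel_measurable M"
    using f by auto
  show "integrable M (\<lambda>x. B * \<bar>f x\<bar>)"
    using f by simp
  show "(\<lambda>x. g x * f x) \<in> borel_measurable M"
    by measurable
  show "AE x in M. norm (g x * f x) \<le> norm (B * \<bar>f x\<bar>)"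
  proof (rule AE_I2)
    fix x assume "x \<in> space M"
    then have "\<bar>g x\<bar> * \<bar>f x\<bar> \<le> B * \<bar>f x\<bar>" "0 \<le> B"
      using bound[of x] by (auto intro: mult_right_mono)
    then show "norm (g x * f x) \<le> norm (B * \<bar>f x\<bar>)"
      by (simp add: abs_mult)
  qed
qed

lemma integrable_pair_measure_dominated:
  fixes g :: "'a \<times> 'b \<Rightarrow> real"
  assumes "finite_measure M" "finite_measure N"
    and [measurable]: "g \<in> borel_measurable (M \<Otimes>\<^sub>M N)" and h: "integrable M h"
    and bound: "\<And>s u. s \<in> space M \<Longrightarrow> u \<in> space N \<Longrightarrow> \<bar>g (s, u)\<bar> \<le> h s"
  shows "integrable (M \<Otimes>\<^sub>M N) g"
proof -
  interpret M: finite_measure M by fact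
  interpret N: finite_measure N by fact
  interpret pair_sigma_finite M N ..
  have [measurable]: "h \<in> borel_measurable M"
    using h by auto
  have "integrable (M \<Otimes>\<^sub>M N) (\<lambda>x. h (fst x))"
  proof (rule integrableI_bounded)
    have "(\<integral>\<^sup>+x. ennreal (norm (h (fst x))) \<partial>(M \<Otimes>\<^sub>M N))
        = (\<integral>\<^sup>+s. ennreal (norm (h s)) * emeasure N (space N) \<partial>M)"
      by (subst N.nn_integral_fst[symmetric]) (auto simp: nn_integral_const mult.commute)
    also have "\<dots> = (\<integral>\<^sup>+s. ennreal (norm (h s)) \<partial>M) * emeasure N (space N)"
      by (rule nn_integral_multc) measurable
    also have "\<dots> < \<infinity>"
      using h N.emeasure_finite[of "space N"]
      by (simp add: integrable_iff_bounded ennreal_mult_eq_top_iff less_top[symmetric])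
    finally show "(\<integral>\<^sup>+x. ennreal (norm (h (fst x))) \<partial>(M \<Otimes>\<^sub>M N)) < \<infinity>" .
  qed measurable
  then show ?thesis
    by (rule Bochner_Integration.integrable_bound)
       (auto intro!: AE_I2 order.trans[OF bound] simp: space_pair_measure)
qed

text \<open>Kernels of Gram type \<open>\<integral> a(t,u) a(s,u) du\<close> are positive: by Fubini their quadratic
  form is \<open>\<integral> (\<integral> a(t,u) f(t) dt)\<^sup>2 du\<close>.\<close>
lemma gram_kernel_quadratic_form_nonneg:
  fixes a :: "'a \<Rightarrow> 'b \<Rightarrow> real"
  assumes "finite_measure M" "finite_measure N"
    and a[measurable]: "(\<lambda>x. a (fst x) (snd x)) \<in> borel_measurable (M \<Otimes>\<^sub>M N)"
    and a_bound: "\<And>t u. \<bar>a t u\<bar> \<le> 1"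
    and f: "integrable M f"
  shows "0 \<le> (\<integral>t. (\<integral>s. (\<integral>u. a t u * a s u \<partial>N) * f s * f t \<partial>M) \<partial>M)"
proof -
  interpret M: finite_measure M by fact
  interpret N: finite_measure N by fact
  interpret pair_sigma_finite M N ..
  have [measurable]: "f \<in> borel_measurable M"
    using f by auto
  define A where "A u = (\<integral>s. a s u * f s \<partial>M)" for u
  have [measurable]: "A \<in> borel_measurable N"
  proof -
    have "(\<lambda>(u, s). a s u * f s) \<in> borel_measurable (N \<Otimes>\<^sub>M M)"
      using measurable_compose[OF measurable_pair_swap' a] by (simp add: case_prod_beta)
    from M.borel_measurable_lebesgue_integral[OF this] show ?thesis
      unfolding A_def by simp
  qed
  have A_bound: "\<bar>A u\<bar> \<le> (\<integral>s. \<bar>f s\<bar> \<partial>M)" if "u \<in> space N" for u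
  proof -
    have [measurable]: "(\<lambda>s. a s u) \<in> borel_measurable M"
      using measurable_Pair1[OF a, of u] that by simp
    have "\<bar>A u\<bar> \<le> (\<integral>s. \<bar>a s u * f s\<bar> \<partial>M)"
      unfolding A_def by (rule integral_abs_bound)
    also have "\<dots> \<le> (\<integral>s. \<bar>f s\<bar> \<partial>M)"
      using f a_bound
      by (intro integral_mono integrable_abs integrable_bounded_mult)
         (auto simp: abs_mult intro: mult_left_le_one_le)
    finally show ?thesis .
  qed
  have inner: "(\<integral>s. (\<integral>u. a t u * a s u \<partial>N) * f s * f t \<partial>M) = (\<integral>u. a t u * f t * A u \<partial>N)"
    if t: "t \<in> space M" for t
  proof -
    have [measurable]: "a t \<in> borel_measurable N"
      using measurable_Pair2[OF a t] by simp
    have "integrable (M \<Otimes>\<^sub>M N) (\<lambda>(s, u). a t u * a s u * f s * f t)"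
    proof (rule integrable_pair_measure_dominated[where h="\<lambda>s. \<bar>f s\<bar> * \<bar>f t\<bar>"])
      fix s u
      have "\<bar>a t u * a s u\<bar> \<le> 1"
        using a_bound[of t u] a_bound[of s u] by (simp add: abs_mult mult_le_one)
      from mult_right_mono[OF this, of "\<bar>f s\<bar> * \<bar>f t\<bar>"]
      show "\<bar>(\<lambda>(s, u). a t u * a s u * f s * f t) (s, u)\<bar> \<le> \<bar>f s\<bar> * \<bar>f t\<bar>"
        by (simp add: abs_mult mult.assoc)
    qed (use assms in auto)
    then have "(\<integral>s. (\<integral>u. a t u * a s u * f s * f t \<partial>N) \<partial>M) = (\<integral>u. (\<integral>s. a t u * a s u * f s * f t \<partial>M) \<partial>N)"
      by (rule Fubini_integral[symmetric])
    then show ?thesis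
      by (simp add: A_def mult_ac flip: integral_mult_right_zero)
  qed
  have "integrable (M \<Otimes>\<^sub>M N) (\<lambda>(t, u). a t u * f t * A u)"
  proof (rule integrable_pair_measure_dominated[where h="\<lambda>s. \<bar>f s\<bar> * (\<integral>s. \<bar>f s\<bar> \<partial>M)"])
    fix s u assume "s \<in> space M" "u \<in> space N"
    then have "\<bar>a s u\<bar> * \<bar>A u\<bar> \<le> 1 * (\<integral>s. \<bar>f s\<bar> \<partial>M)"
      using A_bound a_bound by (intro mult_mono) auto
    from mult_left_mono[OF this, of "\<bar>f s\<bar>"]
    show "\<bar>(\<lambda>(t, u). a t u * f t * A u) (s, u)\<bar> \<le> \<bar>f s\<bar> * (\<integral>s. \<bar>f s\<bar> \<partial>M)"
      by (simp add: abs_mult mult_ac)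
  qed (use assms in auto)
  then have "(\<integral>t. (\<integral>u. a t u * f t * A u \<partial>N) \<partial>M) = (\<integral>u. (\<integral>t. a t u * f t * A u \<partial>M) \<partial>N)"
    by (rule Fubini_integral[symmetric])
  moreover have "(\<integral>t. (\<integral>s. (\<integral>u. a t u * a s u \<partial>N) * f s * f t \<partial>M) \<partial>M)
      = (\<integral>t. (\<integral>u. a t u * f t * A u \<partial>N) \<partial>M)"
    by (rule Bochner_Integration.integral_cong[OF refl inner])
  ultimately have "(\<integral>t. (\<integral>s. (\<integral>u. a t u * a s u \<partial>N) * f s * f t \<partial>M) \<partial>M)
      = (\<integral>u. (\<integral>t. a t u * f t * A u \<partial>M) \<partial>N)"
    by simp
  also have "\<dots> = (\<integral>u. (A u)\<^sup>2 \<partial>N)"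
    by (simp add: A_def power2_eq_square mult.commute)
  finally show ?thesis
    by simp
qed

definition interval_measure :: "real \<Rightarrow> real measure" where
  "interval_measure T = restrict_space lborel {0..T}"

lemma space_interval_measure[simp]: "space (interval_measure T) = {0..T}"
  by (simp add: interval_measure_def)

text \<open>Used as a local \<open>measurable\<close> rule only: declared globally, it sends the
  \<open>measurable\<close> method off proving measurability into \<open>interval_measure\<close>.\<close>
lemma measurable_ident_interval_measure:
  "(\<lambda>x. x) \<in> borel_measurable (interval_measure T)"
  unfolding interval_measure_def by (rule measurable_restrict_space1) simp

lemma finite_measure_interval_measure: "finite_measure (interval_measure T)"
  by (rule finite_measureI) (simp add: interval_measure_def emeasure_restrict_space emeasure_lborel_Icc_eq)

lemma nn_integral_interval_measure:
  "(\<integral>\<^sup>+s. f s \<partial>interval_measure T) = (\<integral>\<^sup>+s. f s * indicator {0..T} s \<partial>lborel)"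
  by (simp add: interval_measure_def nn_integral_restrict_space)

lemma integral_interval_measure:
  fixes f :: "real \<Rightarrow> real"
  shows "(\<integral>s. f s \<partial>interval_measure T) = (LINT s:{0..T}|lborel. f s)"
  by (simp add: interval_measure_def set_lebesgue_integral_def integral_restrict_space)

lemma AE_interval_measure_neq: "AE s in interval_measure T. s \<noteq> t"
proof (rule AE_I[where N="{t} \<inter> {0..T}"])
  show "emeasure (interval_measure T) ({t} \<inter> {0..T}) = 0"
    by (simp add: interval_measure_def emeasure_restrict_space emeasure_eq_0[of "{t}"])
qed (auto simp: interval_measure_def sets_restrict_space_iff)

lemma lborel_integral_exp_mult_interval:
  fixes a m :: real
  assumes "a \<noteq> 0" "0 \<le> m"
  shows "(\<integral>u. indicator {0..m} u * exp (a * u) \<partial>lborel) = (exp (a * m) - 1) / a"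
proof -
  have "(\<integral>u. indicator {0..m} u *\<^sub>R exp (a * u) \<partial>lborel) = exp (a * m) / a - exp (a * 0) / a"
  proof (rule integral_FTC_atLeastAtMost[OF \<open>0 \<le> m\<close>])
    fix x
    have "((\<lambda>u. exp (a * u) / a) has_real_derivative exp (a * x)) (at x within {0..m})"
      using \<open>a \<noteq> 0\<close> by (auto intro!: derivative_eq_intros)
    then show "((\<lambda>u. exp (a * u) / a) has_vector_derivative exp (a * x)) (at x within {0..m})"
      by (simp add: has_real_derivative_iff_has_vector_derivative)
  qed (auto intro!: continuous_intros)
  then show ?thesis
    by (simp add: diff_divide_distrib)
qed

definition exp_kernel :: "real \<Rightarrow> real \<Rightarrow> real \<Rightarrow> real" where
  "exp_kernel l t s = exp (- l * \<bar>t - s\<bar>)"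

definition exp_factor :: "real \<Rightarrow> real \<Rightarrow> real \<Rightarrow> real" where
  "exp_factor l t u = (if u \<le> t then exp (- l * (t - u)) else 0)"

lemma exp_kernel_measurable[measurable]:
  "(\<lambda>x. exp_kernel (f x) (g x) (h x)) \<in> borel_measurable M"
  if [measurable]: "f \<in> borel_measurable M" "g \<in> borel_measurable M" "h \<in> borel_measurable M"
  unfolding exp_kernel_def by measurable

lemma exp_factor_measurable[measurable]:
  "(\<lambda>x. exp_factor (f x) (g x) (h x)) \<in> borel_measurable M"
  if [measurable]: "f \<in> borel_measurable M" "g \<in> borel_measurable M" "h \<in> borel_measurable M"
  unfolding exp_factor_def by measurable

lemma schur_kernel_exp_kernel:
  assumes "0 \<le> l" "0 \<le> T"
  shows "schur_kernel (interval_measure T) (exp_kernel l) T"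
proof -
  interpret finite_measure "interval_measure T"
    by (rule finite_measure_interval_measure)
  note measurable_ident_interval_measure[measurable]
  show ?thesis
  proof
    fix t
    have "(\<integral>\<^sup>+s. exp_kernel l t s \<partial>interval_measure T) \<le> (\<integral>\<^sup>+s. 1 \<partial>interval_measure T)"
      using assms by (intro nn_integral_mono) (auto simp: exp_kernel_def mult_nonneg_nonneg)
    also have "\<dots> = ennreal T"
      using assms by (simp add: interval_measure_def emeasure_restrict_space)
    finally show "(\<integral>\<^sup>+s. exp_kernel l t s \<partial>interval_measure T) \<le> ennreal T" .
  qed (use assms in \<open>auto simp: exp_kernel_def abs_minus_commute\<close>)
qed

text \<open>The stationary Ornstein--Uhlenbeck process with covariance \<open>e\<^sup>-\<^sup>\<lambda>\<^sup>|\<^sup>t\<^sup>-\<^sup>s\<^sup>|\<close>, split into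
  its initial value and a stochastic integral: a rank-one kernel plus a Gram kernel.\<close>
lemma exp_kernel_decomposition:
  assumes l: "0 < l" and t: "t \<in> {0..T}" and s: "s \<in> {0..T}"
  shows "exp_kernel l t s = exp (- l * t) * exp (- l * s)
    + 2 * l * (\<integral>u. exp_factor l t u * exp_factor l s u \<partial>interval_measure T)"
proof -
  define m where "m = min t s"
  have "0 \<le> m"
    using t s by (simp add: m_def)
  have "(\<integral>u. exp_factor l t u * exp_factor l s u \<partial>interval_measure T)
      = (\<integral>u. indicator {0..T} u *\<^sub>R (exp_factor l t u * exp_factor l s u) \<partial>lborel)"
    unfolding interval_measure_def by (rule integral_restrict_space) simp
  also have "\<dots> = (\<integral>u. exp (- l * (t + s)) * (indicator {0..m} u * exp (2 * l * u)) \<partial>lborel)"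
    using t s by (intro Bochner_Integration.integral_cong)
      (auto simp: m_def exp_factor_def indicator_def mult_exp_exp algebra_simps)
  also have "\<dots> = exp (- l * (t + s)) * ((exp (2 * l * m) - 1) / (2 * l))"
    using l \<open>0 \<le> m\<close> by (simp add: lborel_integral_exp_mult_interval)
  also have "\<dots> = (exp (- l * (t + s - 2 * m)) - exp (- l * t) * exp (- l * s)) / (2 * l)"
    by (simp add: mult_exp_exp algebra_simps diff_divide_distrib)
  also have "t + s - 2 * m = \<bar>t - s\<bar>"
    by (simp add: m_def min_def)
  finally show ?thesis
    using l by (simp add: exp_kernel_def field_simps)
qed

lemma integral_exp_kernel_eq:
  assumes "0 < l" and t: "t \<in> {0..T}" and f: "integrable (interval_measure T) f"
  shows "(\<integral>s. exp_kernel l t s * f s \<partial>interval_measure T)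
    = exp (- l * t) * (\<integral>s. exp (- l * s) * f s \<partial>interval_measure T)
      + 2 * l * (\<integral>s. (\<integral>u. exp_factor l t u * exp_factor l s u \<partial>interval_measure T) * f s \<partial>interval_measure T)"
proof -
  let ?M = "interval_measure T"
  note measurable_ident_interval_measure[measurable]
  have [measurable]: "f \<in> borel_measurable ?M"
    using f by auto
  have int_a: "integrable ?M (\<lambda>s. exp (- l * t) * (exp (- l * s) * f s))"
    using \<open>0 < l\<close> by (intro integrable_mult_right integrable_bounded_mult[OF f, where B=1]) auto
  have int_E: "integrable ?M (\<lambda>s. exp_kernel l t s * f s)"
    using \<open>0 < l\<close> by (intro integrable_bounded_mult[OF f, where B=1]) (auto simp: exp_kernel_def)
  have eq: "exp_kernel l t s * f s = exp (- l * t) * (exp (- l * s) * f s)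
      + 2 * l * ((\<integral>u. exp_factor l t u * exp_factor l s u \<partial>?M) * f s)" if "s \<in> space ?M" for s
    using exp_kernel_decomposition[OF \<open>0 < l\<close> t, of s] that by (simp add: algebra_simps)
  have int_G: "integrable ?M (\<lambda>s. 2 * l * ((\<integral>u. exp_factor l t u * exp_factor l s u \<partial>?M) * f s))"
    using Bochner_Integration.integrable_diff[OF int_E int_a]
    by (rule Bochner_Integration.integrable_cong[THEN iffD1, rotated 2]) (auto simp: eq)
  have "(\<integral>s. exp_kernel l t s * f s \<partial>?M) = (\<integral>s. exp (- l * t) * (exp (- l * s) * f s)
      + 2 * l * ((\<integral>u. exp_factor l t u * exp_factor l s u \<partial>?M) * f s) \<partial>?M)"
    by (rule Bochner_Integration.integral_cong[OF refl eq])
  also have "\<dots> = (\<integral>s. exp (- l * t) * (exp (- l * s) * f s) \<partial>?M)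
      + (\<integral>s. 2 * l * ((\<integral>u. exp_factor l t u * exp_factor l s u \<partial>?M) * f s) \<partial>?M)"
    by (rule Bochner_Integration.integral_add[OF int_a int_G])
  finally show ?thesis
    by simp
qed

lemma exp_kernel_positive_semidefinite:
  assumes "0 \<le> T" "0 < l" and f: "square_integrable (interval_measure T) f"
  shows "0 \<le> L2_inner (interval_measure T) (integral_operator (interval_measure T) (exp_kernel l) f) f"
proof -
  let ?M = "interval_measure T"
  interpret schur_kernel ?M "exp_kernel l" T
    using assms by (intro schur_kernel_exp_kernel) auto
  note measurable_ident_interval_measure[measurable]
  have [measurable]: "f \<in> borel_measurable ?M"
    by (rule square_integrable_measurable[OF f])
  have f_int: "integrable ?M f"
    by (rule square_integrable_integrable[OF f])
  define A where "A = (\<integral>s. exp (- l * s) * f s \<partial>?M)"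
  define Y where "Y t = (\<integral>s. (\<integral>u. exp_factor l t u * exp_factor l s u \<partial>?M) * f s \<partial>?M) * f t" for t
  have eq: "integral_operator ?M (exp_kernel l) f t * f t = A * (exp (- l * t) * f t) + 2 * l * Y t"
    if "t \<in> space ?M" for t
    using integral_exp_kernel_eq[OF \<open>0 < l\<close> _ f_int, of t] that
    by (simp add: integral_operator_def A_def Y_def algebra_simps)
  have int_A: "integrable ?M (\<lambda>t. A * (exp (- l * t) * f t))"
    using \<open>0 < l\<close> by (intro integrable_mult_right integrable_bounded_mult[OF f_int, where B=1]) auto
  have int_Y: "integrable ?M (\<lambda>t. 2 * l * Y t)"
    using Bochner_Integration.integrable_diff[OF square_integrable_mult_integrable[OF
        square_integrable_integral_operator(1)[OF f] f] int_A]
    by (rule Bochner_Integration.integrable_cong[THEN iffD1, rotated 2]) (auto simp: eq)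
  have "L2_inner ?M (integral_operator ?M (exp_kernel l) f) f
      = (\<integral>t. A * (exp (- l * t) * f t) + 2 * l * Y t \<partial>?M)"
    unfolding L2_inner_def by (rule Bochner_Integration.integral_cong[OF refl eq])
  also have "\<dots> = (\<integral>t. A * (exp (- l * t) * f t) \<partial>?M) + (\<integral>t. 2 * l * Y t \<partial>?M)"
    by (rule Bochner_Integration.integral_add[OF int_A int_Y])
  also have "\<dots> = A\<^sup>2 + 2 * l * (\<integral>t. Y t \<partial>?M)"
    by (simp add: A_def power2_eq_square)
  finally have quadratic_form: "L2_inner ?M (integral_operator ?M (exp_kernel l) f) f
      = A\<^sup>2 + 2 * l * (\<integral>t. Y t \<partial>?M)" .
  have "0 \<le> (\<integral>t. (\<integral>s. (\<integral>u. exp_factor l t u * exp_factor l s u \<partial>?M) * f s * f t \<partial>?M) \<partial>?M)"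
  proof (rule gram_kernel_quadratic_form_nonneg[OF finite_measure_interval_measure
        finite_measure_interval_measure _ _ f_int])
    show "(\<lambda>x. exp_factor l (fst x) (snd x)) \<in> borel_measurable (?M \<Otimes>\<^sub>M ?M)"
      by measurable
    show "\<bar>exp_factor l t u\<bar> \<le> 1" for t u
      using \<open>0 < l\<close> by (simp add: exp_factor_def mult_nonneg_nonneg)
  qed
  then have "0 \<le> (\<integral>t. Y t \<partial>?M)"
    by (simp add: Y_def)
  with quadratic_form \<open>0 < l\<close> show ?thesis
    by simp
qed


section \<open>The Riesz kernel on an interval\<close>

definition power_weight :: "real \<Rightarrow> real \<Rightarrow> real" where
  "power_weight a l = indicator {0..} l * l powr (a - 1)"

lemma power_weight_nonneg: "0 \<le> power_weight a l"
  by (simp add: power_weight_def)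

lemma power_weight_eq_0: "l \<le> 0 \<Longrightarrow> power_weight a l = 0"
  by (cases "l = 0") (auto simp: power_weight_def)

lemma power_weight_measurable[measurable]: "power_weight a \<in> borel_measurable borel"
  unfolding power_weight_def by measurable

text \<open>Substituting \<open>u = \<lambda>x\<close> in Euler's integral: \<open>\<integral>\<^sub>0\<^sup>\<infinity> \<lambda>\<^sup>a\<^sup>-\<^sup>1 e\<^sup>-\<^sup>\<lambda>\<^sup>x d\<lambda> = \<Gamma>(a) x\<^sup>-\<^sup>a\<close>.\<close>
lemma nn_integral_power_weight_exp:
  assumes a: "0 < a" and x: "0 < x"
  shows "(\<integral>\<^sup>+l. ennreal (power_weight a l * exp (- l * x)) \<partial>lborel) = ennreal (Gamma a * x powr - a)"
proof -
  define I where "I = (\<integral>\<^sup>+l. ennreal (power_weight a l * exp (- l * x)) \<partial>lborel)"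
  have "ennreal (Gamma a) = (\<integral>\<^sup>+t. ennreal (indicator {0..} t * t powr (a - 1) / exp t) \<partial>lborel)"
    by (rule Gamma_conv_nn_integral_real[OF a])
  also have "\<dots> = ennreal \<bar>x\<bar> * (\<integral>\<^sup>+l. ennreal (indicator {0..} (0 + x * l) * (0 + x * l) powr (a - 1)
      / exp (0 + x * l)) \<partial>lborel)"
    by (rule nn_integral_real_affine) (use x in auto)
  also have "(\<integral>\<^sup>+l. ennreal (indicator {0..} (0 + x * l) * (0 + x * l) powr (a - 1) / exp (0 + x * l)) \<partial>lborel)
      = (\<integral>\<^sup>+l. ennreal (x powr (a - 1)) * ennreal (power_weight a l * exp (- l * x)) \<partial>lborel)"
  proof (rule nn_integral_cong)
    fix l
    show "ennreal (indicator {0..} (0 + x * l) * (0 + x * l) powr (a - 1) / exp (0 + x * l))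
        = ennreal (x powr (a - 1)) * ennreal (power_weight a l * exp (- l * x))"
    proof (cases "0 \<le> l")
      case True
      then have "indicator {0..} (x * l) * (x * l) powr (a - 1) / exp (x * l)
          = x powr (a - 1) * (power_weight a l * exp (- l * x))"
        using x by (simp add: power_weight_def powr_mult exp_minus field_simps)
      then show ?thesis
        using ennreal_mult[of "x powr (a - 1)" "power_weight a l * exp (- l * x)"]
          power_weight_nonneg[of a l] by simp
    next
      case False
      then have "x * l < 0"
        using x by (simp add: mult_pos_neg)
      then show ?thesis
        using False by (simp add: power_weight_def)
    qed
  qed
  also have "\<dots> = ennreal (x powr (a - 1)) * I"
    unfolding I_def by (rule nn_integral_cmult) measurable
  finally have "ennreal (Gamma a) = ennreal (\<bar>x\<bar> * x powr (a - 1)) * I"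
    by (simp add: mult.assoc ennreal_mult)
  also have "\<bar>x\<bar> * x powr (a - 1) = x powr a"
    using x by (simp add: powr_mult_base)
  finally have "ennreal (x powr a) * I = ennreal (x powr a) * ennreal (Gamma a * x powr - a)"
    using x Gamma_real_pos[OF a]
    by (simp add: ennreal_mult[symmetric] powr_minus field_simps)
  then show ?thesis
    unfolding I_def using x by (simp add: ennreal_mult_cancel_left)
qed

lemma has_bochner_integral_power_weight_exp:
  assumes "0 < a" "0 < x"
  shows "has_bochner_integral lborel (\<lambda>l. power_weight a l * exp (- l * x)) (Gamma a * x powr - a)"
  using assms Gamma_real_pos[OF \<open>0 < a\<close>]
  by (intro has_bochner_integral_nn_integral nn_integral_power_weight_exp)
     (auto simp: power_weight_nonneg)

text \<open>On the diagonal the kernel takes the junk value \<open>c / 0 = 0\<close>, which is irrelevant since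
  the diagonal is a null set.\<close>
definition riesz_kernel :: "real \<Rightarrow> real \<Rightarrow> real \<Rightarrow> real \<Rightarrow> real" where
  "riesz_kernel a c t s = c / \<bar>t - s\<bar> powr a"

locale riesz_kernel_on_interval =
  fixes T a c :: real
  assumes T_nonneg: "0 \<le> T" and a_pos: "0 < a" and a_less_1: "a < 1" and c_pos: "0 < c"
begin

abbreviation M :: "real measure" where
  "M \<equiv> interval_measure T"

definition schur_bound :: real where
  "schur_bound = 2 * c * (T powr (1 - a) / (1 - a))"

lemma riesz_kernel_le_reflections:
  assumes "t \<in> {0..T}"
  shows "ennreal (riesz_kernel a c t s) * indicator {0..T} s
    \<le> ennreal (c * (indicator {0..T} (t - s) * (t - s) powr - a))
      + ennreal (c * (indicator {0..T} (s - t) * (s - t) powr - a))"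
proof (cases "s \<in> {0..T}")
  case True
  consider "s < t" | "s = t" | "t < s"
    by linarith
  then show ?thesis
  proof cases
    case 1
    then have "riesz_kernel a c t s = c * (indicator {0..T} (t - s) * (t - s) powr - a)"
      using assms True by (simp add: riesz_kernel_def powr_minus_divide)
    with True c_pos show ?thesis
      by (simp add: add_increasing2)
  next
    case 3
    then have "riesz_kernel a c t s = c * (indicator {0..T} (s - t) * (s - t) powr - a)"
      using assms True by (simp add: riesz_kernel_def powr_minus_divide abs_minus_commute)
    with True c_pos show ?thesis
      by (simp add: add_increasing)
  qed (simp add: riesz_kernel_def)
qed simp

lemma nn_integral_riesz_kernel_le:
  assumes t: "t \<in> space M"
  shows "(\<integral>\<^sup>+s. riesz_kernel a c t s \<partial>M) \<le> ennreal schur_bound"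
proof -
  define g where "g x = c * (indicator {0..T} x * x powr - a)" for x
  have [measurable]: "g \<in> borel_measurable borel"
    unfolding g_def by measurable
  have "((\<lambda>x. x powr - a) has_integral (T powr (- a + 1) / (- a + 1))) {0..T}"
    using a_less_1 T_nonneg by (intro has_integral_powr_from_0) auto
  from nn_integral_has_integral_lebesgue[OF _ this]
  have int_powr: "(\<integral>\<^sup>+x. indicator {0..T} x * x powr - a \<partial>lborel) = ennreal (T powr (1 - a) / (1 - a))"
    by (simp add: add.commute)
  have "(\<integral>\<^sup>+x. g x \<partial>lborel) = (\<integral>\<^sup>+x. ennreal c * ennreal (indicator {0..T} x * x powr - a) \<partial>lborel)"
    using c_pos by (intro nn_integral_cong) (simp add: g_def ennreal_mult)
  also have "\<dots> = ennreal c * ennreal (T powr (1 - a) / (1 - a))"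
    by (subst nn_integral_cmult) (measurable, simp add: int_powr)
  finally have int_g: "(\<integral>\<^sup>+x. g x \<partial>lborel) = ennreal (c * (T powr (1 - a) / (1 - a)))"
    using c_pos a_less_1 ennreal_mult[of c "T powr (1 - a) / (1 - a)"] by simp
  have "(\<integral>\<^sup>+s. riesz_kernel a c t s \<partial>M) \<le> (\<integral>\<^sup>+s. ennreal (g (t - s)) + ennreal (g (s - t)) \<partial>lborel)"
    unfolding nn_integral_interval_measure g_def
    using t by (intro nn_integral_mono riesz_kernel_le_reflections) auto
  also have "\<dots> = (\<integral>\<^sup>+s. g (t - s) \<partial>lborel) + (\<integral>\<^sup>+s. g (s - t) \<partial>lborel)"
    by (rule nn_integral_add) measurable
  also have "(\<integral>\<^sup>+s. g (t - s) \<partial>lborel) = (\<integral>\<^sup>+x. g x \<partial>lborel)"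
    using nn_integral_real_affine[of "\<lambda>x. ennreal (g x)" "-1" t] by simp
  also have "(\<integral>\<^sup>+s. g (s - t) \<partial>lborel) = (\<integral>\<^sup>+x. g x \<partial>lborel)"
    using nn_integral_real_affine[of "\<lambda>x. ennreal (g x)" 1 "- t"] by simp
  also have "(\<integral>\<^sup>+x. g x \<partial>lborel) + (\<integral>\<^sup>+x. g x \<partial>lborel) = ennreal schur_bound"
    using c_pos a_less_1 T_nonneg
    by (simp add: int_g schur_bound_def ennreal_plus[symmetric] del: ennreal_plus)
  finally show ?thesis .
qed

lemma schur_kernel_riesz_kernel: "schur_kernel M (riesz_kernel a c) schur_bound"
proof -
  interpret finite_measure M
    by (rule finite_measure_interval_measure)
  note measurable_ident_interval_measure[measurable]
  show ?thesis
  proof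
    show "(\<lambda>x. riesz_kernel a c (fst x) (snd x)) \<in> borel_measurable (M \<Otimes>\<^sub>M M)"
      unfolding riesz_kernel_def by measurable
  qed (use c_pos a_less_1 T_nonneg nn_integral_riesz_kernel_le in
        \<open>auto simp: riesz_kernel_def abs_minus_commute schur_bound_def\<close>)
qed

interpretation K: schur_kernel M "riesz_kernel a c" schur_bound
  by (rule schur_kernel_riesz_kernel)

interpretation pair_sigma_finite M lborel ..

lemma riesz_kernel_exp_mixture:
  assumes "s \<noteq> t"
  shows "has_bochner_integral lborel (\<lambda>l. power_weight a l * exp_kernel l t s) (Gamma a / c * riesz_kernel a c t s)"
  using has_bochner_integral_power_weight_exp[OF a_pos, of "\<bar>t - s\<bar>"] assms c_pos
  by (simp add: exp_kernel_def riesz_kernel_def powr_minus_divide)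

lemma nn_integral_exp_mixture_majorant:
  assumes [measurable]: "f \<in> borel_measurable M" and t: "t \<in> space M"
  shows "(\<integral>\<^sup>+s. (\<integral>\<^sup>+l. ennreal (power_weight a l * exp_kernel l t s * \<bar>f s\<bar>) \<partial>lborel) \<partial>M)
    = ennreal (Gamma a / c) * K.majorant f t"
proof -
  note K.kernel_row_measurable[OF t, measurable]
  have "(\<integral>\<^sup>+s. (\<integral>\<^sup>+l. ennreal (power_weight a l * exp_kernel l t s * \<bar>f s\<bar>) \<partial>lborel) \<partial>M)
      = (\<integral>\<^sup>+s. ennreal (Gamma a / c) * ennreal (riesz_kernel a c t s * \<bar>f s\<bar>) \<partial>M)"
  proof (rule nn_integral_cong_AE)
    show "AE s in M. (\<integral>\<^sup>+l. ennreal (power_weight a l * exp_kernel l t s * \<bar>f s\<bar>) \<partial>lborel)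
        = ennreal (Gamma a / c) * ennreal (riesz_kernel a c t s * \<bar>f s\<bar>)"
      using AE_interval_measure_neq[of t T]
    proof eventually_elim
      case (elim s)
      have "(\<integral>\<^sup>+l. ennreal (power_weight a l * exp_kernel l t s * \<bar>f s\<bar>) \<partial>lborel)
          = (\<integral>\<^sup>+l. ennreal (power_weight a l * exp_kernel l t s) * ennreal \<bar>f s\<bar> \<partial>lborel)"
        by (intro nn_integral_cong) (simp add: ennreal_mult power_weight_nonneg exp_kernel_def)
      also have "\<dots> = (\<integral>\<^sup>+l. ennreal (power_weight a l * exp_kernel l t s) \<partial>lborel) * ennreal \<bar>f s\<bar>"
        by (rule nn_integral_multc) measurable
      also have "(\<integral>\<^sup>+l. ennreal (power_weight a l * exp_kernel l t s) \<partial>lborel)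
          = ennreal (Gamma a / c * riesz_kernel a c t s)"
        using nn_integral_power_weight_exp[OF a_pos, of "\<bar>t - s\<bar>"] elim c_pos
        by (simp add: exp_kernel_def riesz_kernel_def powr_minus_divide)
      also have "ennreal (Gamma a / c * riesz_kernel a c t s) = ennreal (Gamma a / c) * ennreal (riesz_kernel a c t s)"
        using Gamma_real_pos[OF a_pos] c_pos K.kernel_nonneg[of t s]
        by (intro ennreal_mult) auto
      finally show ?case
        using K.kernel_nonneg[of t s] by (simp add: ennreal_mult mult.assoc)
    qed
  qed
  also have "\<dots> = ennreal (Gamma a / c) * K.majorant f t"
    unfolding K.majorant_def by (rule nn_integral_cmult) measurable
  finally show ?thesis .
qed

lemma exp_mixture_measurable:
  "(\<lambda>x. power_weight a (snd x) * exp_kernel (snd x) t (fst x)) \<in> borel_measurable (M \<Otimes>\<^sub>M lborel)"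
proof -
  note measurable_ident_interval_measure[measurable]
  show ?thesis by measurable
qed

lemma exp_mixture_integral_operator_measurable:
  assumes [measurable]: "f \<in> borel_measurable M"
  shows "(\<lambda>x. integral_operator M (exp_kernel (snd x)) f (fst x)) \<in> borel_measurable (M \<Otimes>\<^sub>M lborel)"
proof -
  note measurable_ident_interval_measure[measurable]
  have "(\<lambda>(x, s). exp_kernel (snd x) (fst x) s * f s) \<in> borel_measurable ((M \<Otimes>\<^sub>M lborel) \<Otimes>\<^sub>M M)"
    unfolding case_prod_beta by measurable
  from K.borel_measurable_lebesgue_integral[OF this] show ?thesis
    by (simp add: integral_operator_def)
qed

lemma integral_operator_riesz_kernel_exp_mixture:
  assumes [measurable]: "f \<in> borel_measurable M"
    and t: "t \<in> space M" and finite: "K.majorant f t < \<infinity>"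
  shows "integral_operator M (riesz_kernel a c) f t
    = c / Gamma a * (\<integral>l. power_weight a l * integral_operator M (exp_kernel l) f t \<partial>lborel)"
proof -
  note K.kernel_row_measurable[OF t, measurable] exp_mixture_measurable[of t, measurable]
  define \<Phi> where "\<Phi> = (\<lambda>(s, l). power_weight a l * exp_kernel l t s * f s)"
  have [measurable]: "\<Phi> \<in> borel_measurable (M \<Otimes>\<^sub>M lborel)"
    unfolding \<Phi>_def case_prod_beta by measurable
  have "integrable (M \<Otimes>\<^sub>M lborel) \<Phi>"
  proof (rule integrableI_bounded)
    have "(\<integral>\<^sup>+x. ennreal (norm (\<Phi> x)) \<partial>(M \<Otimes>\<^sub>M lborel))
        = (\<integral>\<^sup>+s. (\<integral>\<^sup>+l. ennreal (power_weight a l * exp_kernel l t s * \<bar>f s\<bar>) \<partial>lborel) \<partial>M)"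
      by (subst lborel.nn_integral_fst[symmetric]) (measurable,
          auto simp: \<Phi>_def abs_mult power_weight_nonneg exp_kernel_def intro!: nn_integral_cong)
    also have "\<dots> < \<infinity>"
      using finite nn_integral_exp_mixture_majorant[OF _ t, of f] by (simp add: ennreal_mult_less_top)
    finally show "(\<integral>\<^sup>+x. ennreal (norm (\<Phi> x)) \<partial>(M \<Otimes>\<^sub>M lborel)) < \<infinity>" .
  qed measurable
  then have Fubini: "(\<integral>s. (\<integral>l. \<Phi> (s, l) \<partial>lborel) \<partial>M) = (\<integral>l. (\<integral>s. \<Phi> (s, l) \<partial>M) \<partial>lborel)"
    by (rule Fubini_integral[symmetric, of "\<lambda>s l. \<Phi> (s, l)", simplified])
  have "(\<lambda>s. \<integral>l. \<Phi> (s, l) \<partial>lborel) \<in> borel_measurable M"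
    by (rule lborel.borel_measurable_lebesgue_integral) measurable
  then have "integral_operator M (riesz_kernel a c) f t = (\<integral>s. c / Gamma a * (\<integral>l. \<Phi> (s, l) \<partial>lborel) \<partial>M)"
    unfolding integral_operator_def
  proof (intro integral_cong_AE)
    show "AE s in M. riesz_kernel a c t s * f s = c / Gamma a * (\<integral>l. \<Phi> (s, l) \<partial>lborel)"
      using AE_interval_measure_neq[of t T]
    proof eventually_elim
      case (elim s)
      have "(\<integral>l. \<Phi> (s, l) \<partial>lborel) = Gamma a / c * riesz_kernel a c t s * f s"
        using has_bochner_integral_integral_eq[OF riesz_kernel_exp_mixture[OF elim]]
        by (simp add: \<Phi>_def)
      then show ?case
        using Gamma_real_pos[OF a_pos] c_pos by simp
    qed
  qed measurable
  also have "\<dots> = c / Gamma a * (\<integral>l. (\<integral>s. \<Phi> (s, l) \<partial>M) \<partial>lborel)"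
    by (simp add: Fubini)
  also have "(\<integral>l. (\<integral>s. \<Phi> (s, l) \<partial>M) \<partial>lborel)
      = (\<integral>l. power_weight a l * integral_operator M (exp_kernel l) f t \<partial>lborel)"
    by (simp add: \<Phi>_def integral_operator_def mult.assoc)
  finally show ?thesis .
qed

lemma abs_exp_mixture_integral_operator_le:
  assumes [measurable]: "f \<in> borel_measurable M" and t: "t \<in> space M"
  shows "ennreal (power_weight a l * \<bar>integral_operator M (exp_kernel l) f t\<bar>)
    \<le> (\<integral>\<^sup>+s. ennreal (power_weight a l * exp_kernel l t s * \<bar>f s\<bar>) \<partial>M)"
proof (cases "0 \<le> l")
  case True
  interpret E: schur_kernel M "exp_kernel l" T
    using True T_nonneg by (rule schur_kernel_exp_kernel)
  have "ennreal (power_weight a l * \<bar>integral_operator M (exp_kernel l) f t\<bar>)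
      \<le> ennreal (power_weight a l) * E.majorant f t"
    using E.abs_integral_operator_le_majorant[OF t, of f] power_weight_nonneg[of a l]
    by (simp add: ennreal_mult mult_left_mono)
  also have "\<dots> = (\<integral>\<^sup>+s. ennreal (power_weight a l * exp_kernel l t s * \<bar>f s\<bar>) \<partial>M)"
    unfolding E.majorant_def using E.kernel_row_measurable[OF t] measurable_ident_interval_measure
    by (subst nn_integral_cmult[symmetric])
       (measurable, auto simp: ennreal_mult power_weight_nonneg exp_kernel_def mult.assoc
         intro!: nn_integral_cong)
  finally show ?thesis .
qed (simp add: power_weight_eq_0)

lemma integrable_exp_mixture_quadratic_form:
  assumes f: "square_integrable M f"
  shows "integrable (M \<Otimes>\<^sub>M lborel)
    (\<lambda>(t, l). power_weight a l * integral_operator M (exp_kernel l) f t * f t)"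
proof (rule integrableI_bounded)
  note [measurable] = square_integrable_measurable[OF f] exp_mixture_integral_operator_measurable
  show "(\<lambda>(t, l). power_weight a l * integral_operator M (exp_kernel l) f t * f t)
      \<in> borel_measurable (M \<Otimes>\<^sub>M lborel)"
    unfolding case_prod_beta by measurable
  have "(\<integral>\<^sup>+x. ennreal (norm ((\<lambda>(t, l). power_weight a l * integral_operator M (exp_kernel l) f t * f t) x))
      \<partial>(M \<Otimes>\<^sub>M lborel))
    = (\<integral>\<^sup>+t. (\<integral>\<^sup>+l. ennreal \<bar>f t\<bar> * ennreal (power_weight a l * \<bar>integral_operator M (exp_kernel l) f t\<bar>)
        \<partial>lborel) \<partial>M)"
    by (subst lborel.nn_integral_fst[symmetric]) (measurable,
        auto simp: abs_mult power_weight_nonneg ennreal_mult[symmetric] mult_ac intro!: nn_integral_cong)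
  also have "\<dots> \<le> (\<integral>\<^sup>+t. ennreal \<bar>f t\<bar> *
      (\<integral>\<^sup>+l. (\<integral>\<^sup>+s. ennreal (power_weight a l * exp_kernel l t s * \<bar>f s\<bar>) \<partial>M) \<partial>lborel) \<partial>M)"
  proof (intro nn_integral_mono)
    fix t assume t: "t \<in> space M"
    note exp_mixture_measurable[of t, measurable]
    have "(\<lambda>x. ennreal (power_weight a (snd x) * exp_kernel (snd x) t (fst x) * \<bar>f (fst x)\<bar>))
        \<in> borel_measurable (M \<Otimes>\<^sub>M lborel)"
      by measurable
    from measurable_compose[OF measurable_pair_swap' this]
    have "(\<lambda>(l, s). ennreal (power_weight a l * exp_kernel l t s * \<bar>f s\<bar>)) \<in> borel_measurable (lborel \<Otimes>\<^sub>M M)"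
      by (simp add: case_prod_beta')
    then show "(\<integral>\<^sup>+l. ennreal \<bar>f t\<bar> * ennreal (power_weight a l * \<bar>integral_operator M (exp_kernel l) f t\<bar>) \<partial>lborel)
        \<le> ennreal \<bar>f t\<bar> * (\<integral>\<^sup>+l. (\<integral>\<^sup>+s. ennreal (power_weight a l * exp_kernel l t s * \<bar>f s\<bar>) \<partial>M) \<partial>lborel)"
      by (subst nn_integral_cmult[symmetric])
         (auto intro!: nn_integral_mono mult_left_mono abs_exp_mixture_integral_operator_le t
           K.borel_measurable_nn_integral)
  qed
  also have "\<dots> = ennreal (Gamma a / c) * (\<integral>\<^sup>+t. ennreal \<bar>f t\<bar> * K.majorant f t \<partial>M)"
  proof -
    have "(\<integral>\<^sup>+l. (\<integral>\<^sup>+s. ennreal (power_weight a l * exp_kernel l t s * \<bar>f s\<bar>) \<partial>M) \<partial>lborel)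
        = ennreal (Gamma a / c) * K.majorant f t" if t: "t \<in> space M" for t
    proof -
      note exp_mixture_measurable[of t, measurable]
      have "(\<integral>\<^sup>+l. (\<integral>\<^sup>+s. ennreal (power_weight a l * exp_kernel l t s * \<bar>f s\<bar>) \<partial>M) \<partial>lborel)
          = (\<integral>\<^sup>+s. (\<integral>\<^sup>+l. ennreal (power_weight a l * exp_kernel l t s * \<bar>f s\<bar>) \<partial>lborel) \<partial>M)"
        by (rule Fubini') measurable
      then show ?thesis
        using nn_integral_exp_mixture_majorant[OF _ t, of f] by simp
    qed
    then show ?thesis
      by (subst nn_integral_cmult[symmetric]) (measurable, auto simp: mult_ac intro!: nn_integral_cong)
  qed
  also have "\<dots> < \<infinity>"
    using K.nn_integral_abs_mult_majorant_finite[OF f f] by (simp add: ennreal_mult_less_top)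
  finally show "(\<integral>\<^sup>+x. ennreal (norm ((\<lambda>(t, l). power_weight a l * integral_operator M (exp_kernel l) f t * f t) x))
      \<partial>(M \<Otimes>\<^sub>M lborel)) < \<infinity>" .
qed

text \<open>By Fubini, the quadratic form of the mixture is the mixture of the quadratic forms.\<close>
lemma riesz_kernel_positive_semidefinite:
  assumes f: "square_integrable M f"
  shows "0 \<le> L2_inner M (integral_operator M (riesz_kernel a c) f) f"
proof -
  note [measurable] = square_integrable_measurable[OF f] exp_mixture_integral_operator_measurable
  define \<Psi> where "\<Psi> = (\<lambda>(t, l). power_weight a l * integral_operator M (exp_kernel l) f t * f t)"
  have [measurable]: "\<Psi> \<in> borel_measurable (M \<Otimes>\<^sub>M lborel)"
    unfolding \<Psi>_def case_prod_beta by measurable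
  have "(\<lambda>t. \<integral>l. \<Psi> (t, l) \<partial>lborel) \<in> borel_measurable M"
    by (rule lborel.borel_measurable_lebesgue_integral) measurable
  then have "L2_inner M (integral_operator M (riesz_kernel a c) f) f = (\<integral>t. c / Gamma a * (\<integral>l. \<Psi> (t, l) \<partial>lborel) \<partial>M)"
    unfolding L2_inner_def
  proof (intro integral_cong_AE)
    show "AE t in M. integral_operator M (riesz_kernel a c) f t * f t = c / Gamma a * (\<integral>l. \<Psi> (t, l) \<partial>lborel)"
      using K.AE_majorant_finite[OF f] AE_space
    proof eventually_elim
      case (elim t)
      then show ?case
        by (simp add: integral_operator_riesz_kernel_exp_mixture \<Psi>_def)
    qed
  qed measurable
  also have "\<dots> = c / Gamma a * (\<integral>l. (\<integral>t. \<Psi> (t, l) \<partial>M) \<partial>lborel)"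
    using Fubini_integral[symmetric, of "\<lambda>t l. \<Psi> (t, l)"] integrable_exp_mixture_quadratic_form[OF f]
    by (simp add: \<Psi>_def)
  also have "(\<integral>l. (\<integral>t. \<Psi> (t, l) \<partial>M) \<partial>lborel)
      = (\<integral>l. power_weight a l * L2_inner M (integral_operator M (exp_kernel l) f) f \<partial>lborel)"
    by (simp add: \<Psi>_def L2_inner_def mult.assoc)
  also have "0 \<le> \<dots>"
  proof (rule Bochner_Integration.integral_nonneg)
    fix l
    show "0 \<le> power_weight a l * L2_inner M (integral_operator M (exp_kernel l) f) f"
    proof (cases "0 < l")
      case True
      then show ?thesis
        using exp_kernel_positive_semidefinite[OF T_nonneg True f] power_weight_nonneg by simp
    qed (simp add: power_weight_eq_0)
  qed
  then have "0 \<le> c / Gamma a * \<dots>"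
    using c_pos Gamma_real_pos[OF a_pos] by simp
  finally show ?thesis .
qed

sublocale psd: psd_schur_kernel M "riesz_kernel a c" schur_bound
  by (intro psd_schur_kernel.intro schur_kernel_riesz_kernel psd_schur_kernel_axioms.intro
      riesz_kernel_positive_semidefinite)

end

section \<open>The operator \<open>\<Gamma>\<^sup>H\<^sub>T\<close>\<close>

lemma L2space_eq: "L2space T = Collect (square_integrable (interval_measure T))"
  unfolding set_eq_iff mem_Collect_eq
  by (simp add: L2space_def square_integrable_def interval_measure_def set_borel_measurable_def
      borel_measurable_restrict_space_iff set_integrable_eq)

lemma L2norm_eq_L2_norm: "L2norm T f = L2_norm (interval_measure T) f"
  by (simp add: L2norm_def L2_norm_def integral_interval_measure)

lemma L2inner_eq_L2_inner: "L2inner T f g = L2_inner (interval_measure T) f g"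
  by (simp add: L2inner_def L2_inner_def integral_interval_measure)

lemma L2eq_iff_AE: "L2eq T f g \<longleftrightarrow> (AE t in interval_measure T. f t = g t)"
  unfolding L2eq_def interval_measure_def by (subst AE_restrict_space_iff) auto

lemma L2opnorm_eq_op_norm:
  assumes "psd_schur_kernel (interval_measure T) k K"
  shows "L2opnorm T (integral_operator (interval_measure T) k) = psd_schur_kernel.op_norm (interval_measure T) k"
  unfolding L2opnorm_def psd_schur_kernel.op_norm_def[OF assms] L2space_eq mem_Collect_eq
    L2norm_eq_L2_norm ..

lemma GammaH_eq_integral_operator:
  "GammaH H T = integral_operator (interval_measure T) (riesz_kernel (2 - 2 * H) (H * (2 * H - 1)))"
  by (intro ext) (simp add: GammaH_def integral_operator_def riesz_kernel_def integral_interval_measure)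

context riesz_kernel_on_interval
begin

lemma riesz_operator_L2space_properties:
  shows "(\<exists>C. \<forall>f\<in>L2space T. integral_operator M (riesz_kernel a c) f \<in> L2space T \<and>
                 L2norm T (integral_operator M (riesz_kernel a c) f) \<le> C * L2norm T f)
       \<and> (\<forall>f\<in>L2space T. \<forall>g\<in>L2space T.
                 L2inner T (integral_operator M (riesz_kernel a c) f) g
                 = L2inner T f (integral_operator M (riesz_kernel a c) g))
       \<and> (\<forall>f\<in>L2space T. L2inner T (integral_operator M (riesz_kernel a c) f) f \<ge> 0)
       \<and> (\<forall>g\<in>L2space T. \<exists>f\<in>L2space T. L2eq T (psd.id_plus f) g)
       \<and> (\<forall>f1\<in>L2space T. \<forall>f2\<in>L2space T.
                 L2eq T (psd.id_plus f1) (psd.id_plus f2) \<longrightarrow> L2eq T f1 f2)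
       \<and> (\<exists>C. \<forall>f\<in>L2space T. L2norm T f \<le> C * L2norm T (psd.id_plus f))
       \<and> (\<exists>h\<in>L2space T. L2eq T (psd.id_plus h) (\<lambda>_. 1)
              \<and> (\<forall>n. psd.neumann_partial_sum (\<lambda>_. 1) n \<in> L2space T)
              \<and> (\<lambda>n. L2norm T (\<lambda>t. psd.neumann_partial_sum (\<lambda>_. 1) n t - h t)) \<longlonglongrightarrow> 0)"
  unfolding L2space_eq L2norm_eq_L2_norm L2inner_eq_L2_inner L2eq_iff_AE
    Ball_Collect[symmetric] Bex_def mem_Collect_eq
  apply (intro conjI)
  subgoal by (auto intro!: exI[of _ schur_bound] psd.square_integrable_integral_operator)
  subgoal by (auto simp: psd.integral_operator_self_adjoint)
  subgoal by (auto intro: riesz_kernel_positive_semidefinite)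
  subgoal
  proof
    fix g assume "g \<in> Collect (square_integrable M)"
    then obtain h where "square_integrable M h" "AE t in M. psd.id_plus h t = g t"
      by (auto elim: psd.neumann_series_solves)
    then show "\<exists>h. square_integrable M h \<and> (AE t in M. psd.id_plus h t = g t)"
      by blast
  qed
  subgoal
    using psd.id_plus_injective_AE by simp
  subgoal by (auto intro!: exI[of _ 1] psd.L2_norm_le_id_plus)
  subgoal
  proof -
    obtain h where "square_integrable M h" "AE t in M. psd.id_plus h t = 1"
      "(\<lambda>n. L2_norm M (\<lambda>t. psd.neumann_partial_sum (\<lambda>_. 1) n t - h t)) \<longlonglongrightarrow> 0"
      using psd.neumann_series_solves[OF psd.square_integrable_const] .
    then show ?thesis
      using psd.square_integrable_neumann_partial_sum[OF psd.square_integrable_const] by blast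
  qed
  done

end

theorem mainTheorem16:
  fixes H T :: real
  assumes "1/2 < H" and "H < 1" and "0 < T"
  shows "(\<exists>C. \<forall>f\<in>L2space T. GammaH H T f \<in> L2space T \<and>
                 L2norm T (GammaH H T f) \<le> C * L2norm T f)
       \<and> (\<forall>f\<in>L2space T. \<forall>g\<in>L2space T.
                 L2inner T (GammaH H T f) g = L2inner T f (GammaH H T g))
       \<and> (\<forall>f\<in>L2space T. L2inner T (GammaH H T f) f \<ge> 0)
       \<and> (\<forall>g\<in>L2space T. \<exists>f\<in>L2space T. L2eq T (GammaT H T f) g)
       \<and> (\<forall>f1\<in>L2space T. \<forall>f2\<in>L2space T.
                 L2eq T (GammaT H T f1) (GammaT H T f2) \<longrightarrow> L2eq T f1 f2)
       \<and> (\<exists>C. \<forall>f\<in>L2space T. L2norm T f \<le> C * L2norm T (GammaT H T f))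
       \<and> (\<exists>h\<in>L2space T. L2eq T (GammaT H T h) (\<lambda>_. 1)
              \<and> (\<forall>n. hpartial H T n \<in> L2space T)
              \<and> (\<lambda>n. L2norm T (\<lambda>t. hpartial H T n t - h t)) \<longlonglongrightarrow> 0)"
proof -
  interpret riesz_kernel_on_interval T "2 - 2 * H" "H * (2 * H - 1)"
    using assms by unfold_locales auto
  have GammaH: "GammaH H T = integral_operator M (riesz_kernel (2 - 2 * H) (H * (2 * H - 1)))"
    by (rule GammaH_eq_integral_operator)
  have GammaT: "GammaT H T = psd.id_plus"
    by (intro ext) (simp add: GammaT_def psd.id_plus_def GammaH)
  have shift: "L2opnorm T (GammaH H T) / 2 = psd.neumann_shift"
    unfolding GammaH L2opnorm_eq_op_norm[OF psd.psd_schur_kernel_axioms]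
    by (simp add: psd.neumann_shift_def)
  have "(\<lambda>f t. L2opnorm T (GammaH H T) / 2 * f t - GammaH H T f t) = psd.contraction"
    unfolding shift by (intro ext) (simp add: psd.contraction_def GammaH)
  then have hpartial: "hpartial H T = psd.neumann_partial_sum (\<lambda>_. 1)"
    by (intro ext) (simp add: hpartial_def Let_def shift psd.neumann_partial_sum_def)
  show ?thesis
    unfolding GammaH GammaT hpartial by (rule riesz_operator_L2space_properties)
qed

end
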